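(* For every $\varepsilon,\alpha>0$ and $d\in\mathbb{N}$, there exists an $\varepsilon$-$\nabla_0$DP proper PAC learner with error at most $\alpha$ and sample complexity $n=\tilde O\!\left(\frac{1}{\alpha\varepsilon}\log d\right)$ for the class of point functions, and likewise for the class of threshold functions (where $\tilde O$ hides factors polylogarithmic in $1/\alpha$ and $\log d$).
   Context: PAC setting: an unknown distribution $\mathcal{D}$ on $\{0,1\}^d\times\{0,1\}$; the learner gets $n$ i.i.d. samples $(x_i,y_i)$. $\mathrm{err}(h;\mathcal{D})=\Pr_{(x,y)\sim\mathcal{D}}[h(x)\ne y]$. An algorithm is a PAC learner for $\mathcal{H}$ with error at most $\alpha$ if, whenever $\mathcal{D}$ is realizable by some $h\in\mathcal{H}$ (i.e., $y=h(x)$ almost surely), with probability at least $0.9$ it outputs $h'$ with $\mathrm{err}(h';\mathcal{D})\le\alpha$; it is proper if its output lies in $\mathcal{H}$. Point functions: $\mathrm{point}_u(z)=\mathbf{1}[u=z]$, $u\in\{0,1\}^d$. Threshold functions: with $\{0,1\}^d$ ordered lexicographically, $\mathrm{Thre}_z(x)=\mathbf{1}[x\ge z]$, $z\in\{0,1\}^d$. For privacy each sample $(x_i,y_i)$ is treated as a record in $\{0,1\}^{d+1}$ (label as an extra attribute), and $M$ is $\varepsilon$-$\nabla_0$DP if for all datasets differing only in record $i$, $\Pr[M(D)\in S]\le e^{\varepsilon\|D_i-D'_i\|_0}\Pr[M(D')\in S]$ with $\|\cdot\|_0$ the Hamming distance. *)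

theory Defs
  imports "HOL-Probability.Probability"
begin

text \<open>Points of {0,1}^d are boolean lists of length d (False = 0, True = 1).
  A labelled example (x,y) is a record in {0,1}^(d+1).\<close>

type_synonym example = "bool list \<times> bool"
type_synonym hyp = "bool list \<Rightarrow> bool"

definition cube :: "nat \<Rightarrow> bool list set" where
  "cube d = {x. length x = d}"

definition point_fn :: "bool list \<Rightarrow> hyp" where
  "point_fn u = (\<lambda>z. u = z)"

definition point_class :: "nat \<Rightarrow> hyp set" where
  "point_class d = {point_fn u | u. u \<in> cube d}"

definition lex_le :: "bool list \<Rightarrow> bool list \<Rightarrow> bool" where
  "lex_le z x \<longleftrightarrow> z = x \<or> (z, x) \<in> lexord {(False, True)}"

definition thre_fn :: "bool list \<Rightarrow> hyp" where
  "thre_fn z = (\<lambda>x. lex_le z x)"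

definition thre_class :: "nat \<Rightarrow> hyp set" where
  "thre_class d = {thre_fn z | z. z \<in> cube d}"

definition err :: "hyp \<Rightarrow> example pmf \<Rightarrow> real" where
  "err h D = measure_pmf.prob D {(x, y). h x \<noteq> y}"

primrec iid :: "'a pmf \<Rightarrow> nat \<Rightarrow> 'a list pmf" where
  "iid D 0 = return_pmf []"
| "iid D (Suc n) = bind_pmf D (\<lambda>s. map_pmf (\<lambda>ss. s # ss) (iid D n))"

definition distr_on :: "nat \<Rightarrow> example pmf \<Rightarrow> bool" where
  "distr_on d D \<longleftrightarrow> (\<forall>(x, y) \<in> set_pmf D. x \<in> cube d)"

definition realizable :: "hyp set \<Rightarrow> example pmf \<Rightarrow> bool" where
  "realizable H D \<longleftrightarrow> (\<exists>h\<in>H. \<forall>(x, y) \<in> set_pmf D. y = h x)"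

definition pac_learner ::
  "nat \<Rightarrow> hyp set \<Rightarrow> real \<Rightarrow> nat \<Rightarrow> (example list \<Rightarrow> hyp pmf) \<Rightarrow> bool" where
  "pac_learner d H \<alpha> n M \<longleftrightarrow>
     (\<forall>D. distr_on d D \<and> realizable H D \<longrightarrow>
        measure_pmf.prob (bind_pmf (iid D n) M) {h. err h D \<le> \<alpha>} \<ge> 0.9)"

definition proper :: "hyp set \<Rightarrow> (example list \<Rightarrow> hyp pmf) \<Rightarrow> bool" where
  "proper H M \<longleftrightarrow> (\<forall>S. set_pmf (M S) \<subseteq> H)"

definition ham :: "nat \<Rightarrow> example \<Rightarrow> example \<Rightarrow> nat" where
  "ham d r r' = card {j. j < d \<and> fst r ! j \<noteq> fst r' ! j}
                + (if snd r \<noteq> snd r' then 1 else 0)"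

definition record_on :: "nat \<Rightarrow> example \<Rightarrow> bool" where
  "record_on d r \<longleftrightarrow> fst r \<in> cube d"

definition nabla0_dp :: "nat \<Rightarrow> nat \<Rightarrow> real \<Rightarrow> (example list \<Rightarrow> hyp pmf) \<Rightarrow> bool" where
  "nabla0_dp d n \<epsilon> M \<longleftrightarrow>
     (\<forall>Ds Ds' i S. length Ds = n \<and> length Ds' = n \<and> i < n
        \<and> (\<forall>r\<in>set Ds. record_on d r) \<and> (\<forall>r\<in>set Ds'. record_on d r)
        \<and> (\<forall>j<n. j \<noteq> i \<longrightarrow> Ds ! j = Ds' ! j) \<longrightarrow>
        measure_pmf.prob (M Ds) S
          \<le> exp (\<epsilon> * real (ham d (Ds ! i) (Ds' ! i))) * measure_pmf.prob (M Ds') S)"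

end

theory Submission
  imports Defs "HOL-Library.List_Lexorder" "HOL-Analysis.Harmonic_Numbers"
begin

text \<open>Both learners are one exponential mechanism over words \<open>p\<close> of length at most \<open>d\<close> that name
  hypotheses. The score of \<open>p\<close> is the empirical error of its hypothesis plus the total Hamming
  distance from \<open>p\<close> to its \<open>t\<close> nearest sample points. Changing one record by Hamming distance
  \<open>k\<close> moves every score by at most \<open>2 k\<close>, so sampling with weights \<open>exp (- \<epsilon> / 4 \<cdot> score)\<close> is
  \<open>\<epsilon>\<close>-\<open>\<nabla>\<^sub>0\<close>DP. By convexity of \<open>exp\<close> the distance term contributes at most \<open>(n / t) (d + 1) e\<close> to
  the normalising constant once \<open>\<epsilon> t / 4 \<ge> ln d\<close>, so with \<open>n \<approx> t log (1 / \<alpha>) / \<alpha>\<close> samples a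
  candidate whose score lies \<open>\<alpha> n / 16\<close> below the empirical error of every bad hypothesis is
  output with probability \<open>19 / 20\<close>.

  Such a candidate exists for most samples. For points it is the target if positive examples
  are frequent; otherwise every bad point carries mass \<open>> 7 \<alpha> / 8\<close>, and within Hamming distance
  \<open>r \<approx> log (64 / \<alpha>)\<close> of one of them lies a point of mass \<open>\<le> \<alpha> / 64\<close>, which is close to many
  samples and errs rarely. For thresholds it is the prefix of the target one bit longer than
  the longest prefix of mass \<open>> \<alpha> / 16\<close>: the padded threshold errs only inside its own light
  prefix set, and all samples sharing the heavy parent prefix are within distance \<open>1\<close>. The bad
  thresholds on either side of the target are nested, so a single Chernoff bound per side
  shows that all of them make many empirical mistakes.\<close>

section \<open>Counting hits in i.i.d. samples\<close>

definition count_in :: "'a set \<Rightarrow> 'a list \<Rightarrow> nat" where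
  "count_in A xs = length (filter (\<lambda>x. x \<in> A) xs)"

lemma count_in_eq_card: "count_in A xs = card {i. i < length xs \<and> xs ! i \<in> A}"
  unfolding count_in_def by (rule length_filter_conv_card)

lemma count_in_mono:
  "(\<And>x. x \<in> set xs \<Longrightarrow> x \<in> A \<Longrightarrow> x \<in> B) \<Longrightarrow> count_in A xs \<le> count_in B xs"
  unfolding count_in_def by (induction xs) auto

lemma obtain_indices_in:
  assumes "t \<le> count_in A xs"
  obtains I where "I \<subseteq> {..<length xs}" "card I = t" "\<And>i. i \<in> I \<Longrightarrow> xs ! i \<in> A"
proof -
  obtain I where "I \<subseteq> {i. i < length xs \<and> xs ! i \<in> A}" "card I = t"
    using assms by (auto simp: count_in_eq_card intro: obtain_subset_with_card_n)
  then show ?thesis using that by auto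
qed

lemma prod_list_if_in: "prod_list (map (\<lambda>x. if x \<in> A then c else 1) xs) = c ^ count_in A xs"
  by (induction xs) (auto simp: count_in_def)

lemma set_pmf_iid: "xs \<in> set_pmf (iid D n) \<Longrightarrow> length xs = n \<and> set xs \<subseteq> set_pmf D"
  by (induction n arbitrary: xs) force+

lemma finite_set_pmf_iid: "finite (set_pmf D) \<Longrightarrow> finite (set_pmf (iid D n))"
  by (induction n) auto

lemma nn_integral_iid_prod_list:
  fixes f :: "'a \<Rightarrow> real"
  assumes "\<And>x. 0 \<le> f x"
  shows "(\<integral>\<^sup>+xs. ennreal (prod_list (map f xs)) \<partial>iid D n) = (\<integral>\<^sup>+x. ennreal (f x) \<partial>D) ^ n"
proof (induction n)
  case (Suc n)
  have "(\<integral>\<^sup>+xs. ennreal (prod_list (map f xs)) \<partial>iid D (Suc n))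
     = (\<integral>\<^sup>+x. ennreal (f x) * (\<integral>\<^sup>+xs. ennreal (prod_list (map f xs)) \<partial>iid D n) \<partial>D)"
    by (simp add: ennreal_mult' assms nn_integral_cmult)
  also have "\<dots> = (\<integral>\<^sup>+x. ennreal (f x) \<partial>D) ^ Suc n"
    by (simp add: Suc nn_integral_multc)
  finally show ?case .
qed simp

lemma expectation_iid_prod_list:
  fixes f :: "'a \<Rightarrow> real"
  assumes fin: "finite (set_pmf D)" and nonneg: "\<And>x. 0 \<le> f x"
  shows "measure_pmf.expectation (iid D n) (\<lambda>xs. prod_list (map f xs))
       = measure_pmf.expectation D f ^ n"
proof -
  have int: "integrable (iid D n) (\<lambda>xs. prod_list (map f xs))" "integrable D f"
    by (simp_all add: integrable_measure_pmf_finite finite_set_pmf_iid fin)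
  have nn: "AE xs in iid D n. 0 \<le> prod_list (map f xs)"
    by (intro AE_I2 prod_list_nonneg) (auto simp: nonneg)
  have "ennreal (measure_pmf.expectation (iid D n) (\<lambda>xs. prod_list (map f xs)))
      = (\<integral>\<^sup>+xs. ennreal (prod_list (map f xs)) \<partial>iid D n)"
    by (rule nn_integral_eq_integral[OF int(1) nn, symmetric])
  also have "\<dots> = (\<integral>\<^sup>+x. ennreal (f x) \<partial>D) ^ n"
    by (rule nn_integral_iid_prod_list) (rule nonneg)
  also have "\<dots> = ennreal (measure_pmf.expectation D f ^ n)"
    by (subst nn_integral_eq_integral[OF int(2)]) (auto simp: nonneg ennreal_power)
  finally show ?thesis
    using integral_nonneg_AE[OF nn] by (simp add: nonneg integral_nonneg)
qed

lemma prob_count_in_exp_moment: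
  assumes fin: "finite (set_pmf D)" and "0 \<le> c" "0 < b"
  shows "measure_pmf.prob (iid D n) {xs. b \<le> c ^ count_in A xs}
       \<le> (1 + (c - 1) * measure_pmf.prob D A) ^ n / b"
proof -
  let ?f = "\<lambda>x. if x \<in> A then c else 1"
  have "measure_pmf.prob (iid D n) {xs. b \<le> c ^ count_in A xs}
      = measure_pmf.prob (iid D n) {xs \<in> space (iid D n). b \<le> prod_list (map ?f xs)}"
    by (simp add: prod_list_if_in)
  also have "\<dots> \<le> measure_pmf.expectation (iid D n) (\<lambda>xs. prod_list (map ?f xs)) / b"
    using assms by (intro integral_Markov_inequality_measure[where A = UNIV] AE_I2)
      (auto simp: integrable_measure_pmf_finite finite_set_pmf_iid intro!: prod_list_nonneg)
  also have "measure_pmf.expectation D ?f = 1 + (c - 1) * measure_pmf.prob D A"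
  proof -
    have "?f = (\<lambda>x. 1 + (c - 1) * indicator A x)"
      by (auto simp: indicator_def)
    then show ?thesis by (simp add: measure_pmf.emeasure_eq_measure)
  qed
  then have "measure_pmf.expectation (iid D n) (\<lambda>xs. prod_list (map ?f xs))
      = (1 + (c - 1) * measure_pmf.prob D A) ^ n"
    using assms by (simp add: expectation_iid_prod_list)
  finally show ?thesis .
qed

lemma two_power_le_exp: "(2::real) ^ k \<le> exp k"
proof -
  have "(2::real) ^ k \<le> exp 1 ^ k"
    using exp_ge_add_one_self[of 1] by (intro power_mono) auto
  then show ?thesis by (simp add: exp_of_nat_mult[symmetric])
qed

lemma ln2_le_three_quarters: "ln (2::real) \<le> 3 / 4"
proof -
  have "(2::real) \<le> (35 / 32) ^ 8" by (simp add: power_divide)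
  also have "\<dots> \<le> exp (3 / 32) ^ 8"
    using exp_ge_add_one_self[of "3 / 32 :: real"] by (intro power_mono) simp_all
  also have "\<dots> = exp (3 / 4)" by (simp flip: exp_of_nat_mult)
  finally show ?thesis
    using ln_le_cancel_iff[of 2 "exp (3 / 4)"] by simp
qed

lemma count_in_lower_tail:
  assumes fin: "finite (set_pmf D)" and q: "0 \<le> q" "q \<le> measure_pmf.prob D A"
  shows "measure_pmf.prob (iid D n) {xs. real (count_in A xs) \<le> q * n / 2} \<le> exp (- q * n / 8)"
proof -
  let ?p = "measure_pmf.prob D A"
  let ?a = "q * n / 2"
  have "{xs. real (count_in A xs) \<le> ?a} \<subseteq> {xs. 2 powr (- ?a) \<le> (1 / 2 :: real) ^ count_in A xs}"
  proof safe
    fix xs assume "real (count_in A xs) \<le> ?a"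
    then have "2 powr (- ?a) \<le> 2 powr (- real (count_in A xs))"
      by (intro powr_mono) simp_all
    then show "2 powr (- ?a) \<le> (1 / 2 :: real) ^ count_in A xs"
      by (simp add: powr_minus powr_realpow power_one_over inverse_eq_divide)
  qed
  then have "measure_pmf.prob (iid D n) {xs. real (count_in A xs) \<le> ?a}
      \<le> measure_pmf.prob (iid D n) {xs. 2 powr (- ?a) \<le> (1 / 2 :: real) ^ count_in A xs}"
    by (rule measure_pmf.finite_measure_mono) simp
  also have "\<dots> \<le> (1 - ?p / 2) ^ n * 2 powr ?a"
    using prob_count_in_exp_moment[OF fin, of "1 / 2" "2 powr (- ?a)" n A]
    by (simp add: powr_minus field_simps)
  also have "2 powr ?a = exp (?a * ln 2)"
    by (simp add: powr_def)
  also have "(1 - ?p / 2) ^ n * \<dots> \<le> exp (- ?p / 2) ^ n * exp (?a * ln 2)"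
  proof (intro mult_right_mono power_mono)
    show "1 - ?p / 2 \<le> exp (- ?p / 2)"
      using exp_ge_add_one_self[of "- ?p / 2"] by simp
    show "0 \<le> 1 - ?p / 2"
      using measure_pmf.prob_le_1[of D A] by linarith
  qed simp
  also have "\<dots> = exp ((ln 2 * q - ?p) * n / 2)"
    by (simp add: exp_add[symmetric] exp_of_nat_mult[symmetric] algebra_simps)
  also have "\<dots> \<le> exp (- q * n / 8)"
  proof -
    have "ln 2 * q - ?p \<le> - q / 4"
      using ln2_le_three_quarters q mult_right_mono[of "ln 2" "3 / 4" q] by linarith
    then show ?thesis
      using mult_right_mono[of "ln 2 * q - ?p" "- q / 4" "real n / 2"] by simp
  qed
  finally show ?thesis .
qed

lemma count_in_upper_tail:
  assumes fin: "finite (set_pmf D)" and q: "0 \<le> q" "measure_pmf.prob D A \<le> q"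
  shows "measure_pmf.prob (iid D n) {xs. 3 * q * n \<le> real (count_in A xs)} \<le> exp (- q * n / 2)"
proof -
  let ?p = "measure_pmf.prob D A"
  let ?a = "3 * q * n"
  have "{xs. ?a \<le> real (count_in A xs)} = {xs. 2 powr ?a \<le> (2 :: real) ^ count_in A xs}"
    by (simp add: powr_realpow[symmetric])
  then have "measure_pmf.prob (iid D n) {xs. ?a \<le> real (count_in A xs)} \<le> (1 + ?p) ^ n / 2 powr ?a"
    using prob_count_in_exp_moment[OF fin, of 2 "2 powr ?a" n A] by simp
  also have "2 powr ?a = exp (?a * ln 2)"
    by (simp add: powr_def)
  also have "(1 + ?p) ^ n / \<dots> \<le> exp ?p ^ n / exp (?a * ln 2)"
    by (intro divide_right_mono power_mono) (simp_all add: exp_ge_add_one_self add_nonneg_nonneg)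
  also have "\<dots> = exp ((?p - 3 * ln 2 * q) * n)"
    by (simp add: exp_diff[symmetric] exp_of_nat_mult[symmetric] algebra_simps)
  also have "\<dots> \<le> exp (- q * n / 2)"
  proof -
    have "?p - 3 * ln 2 * q \<le> - q / 2"
      using ln2_ge_two_thirds q mult_right_mono[of "2 / 3" "ln 2" q] by linarith
    then show ?thesis
      using mult_right_mono[of "?p - 3 * ln 2 * q" "- q / 2" "real n"] by simp
  qed
  finally show ?thesis .
qed

section \<open>Hamming distance\<close>

text \<open>Only the common prefix is compared, so for a word \<open>p\<close> with \<open>length p \<le> length x\<close>
  this is the distance between \<open>p\<close> and the first \<open>length p\<close> coordinates of \<open>x\<close>.\<close>

fun hamming_dist :: "bool list \<Rightarrow> bool list \<Rightarrow> nat" where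
  "hamming_dist (a # x) (b # y) = (if a = b then 0 else 1) + hamming_dist x y"
| "hamming_dist _ _ = 0"

lemma hamming_dist_self [simp]: "hamming_dist x x = 0"
  by (induction x) auto

lemma hamming_dist_le_length: "hamming_dist x y \<le> length y"
  by (induction x y rule: hamming_dist.induct) auto

lemma hamming_dist_append:
  "length a = length b \<Longrightarrow> hamming_dist (a @ x) (b @ y) = hamming_dist a b + hamming_dist x y"
  by (induction a b rule: hamming_dist.induct) auto

lemma hamming_dist_triangle:
  "length x = length y \<Longrightarrow> hamming_dist x z \<le> hamming_dist y z + hamming_dist x y"
proof (induction x y arbitrary: z rule: hamming_dist.induct)
  case (1 a x b y)
  show ?case
  proof (cases z)
    case (Cons c z')
    then show ?thesis using "1.IH"[of z'] "1.prems" by auto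
  qed simp
qed auto

lemma hamming_dist_eq_0_iff: "length x = length y \<Longrightarrow> hamming_dist x y = 0 \<longleftrightarrow> x = y"
  by (induction x y rule: hamming_dist.induct) auto

lemma hamming_dist_eq_card:
  "length x = length y \<Longrightarrow> hamming_dist x y = card {j. j < length x \<and> x ! j \<noteq> y ! j}"
proof (induction x y rule: hamming_dist.induct)
  case (1 a x b y)
  have "{j. j < length (a # x) \<and> (a # x) ! j \<noteq> (b # y) ! j}
     = (if a = b then {} else {0}) \<union> Suc ` {j. j < length x \<and> x ! j \<noteq> y ! j}"
  proof (rule set_eqI)
    fix j
    show "j \<in> {j. j < length (a # x) \<and> (a # x) ! j \<noteq> (b # y) ! j}
      \<longleftrightarrow> j \<in> (if a = b then {} else {0}) \<union> Suc ` {j. j < length x \<and> x ! j \<noteq> y ! j}"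
      by (cases j) (auto simp: inj_image_mem_iff)
  qed
  moreover have "card ((if a = b then {} else {0}) \<union> Suc ` {j. j < length x \<and> x ! j \<noteq> y ! j})
     = (if a = b then 0 else 1) + card {j. j < length x \<and> x ! j \<noteq> y ! j}"
    by (subst card_Un_disjoint) (auto simp: card_image)
  ultimately show ?case using 1 by simp
qed auto

lemma hamming_dist_le_ham:
  "length (fst r) = d \<Longrightarrow> length (fst r') = d \<Longrightarrow> hamming_dist (fst r) (fst r') \<le> ham d r r'"
  by (simp add: ham_def hamming_dist_eq_card)

lemma one_le_ham:
  assumes "length (fst r) = d" "length (fst r') = d" "r \<noteq> r'"
  shows "1 \<le> ham d r r'"
proof (cases "snd r = snd r'")
  case True
  then have "fst r \<noteq> fst r'" using assms(3) by (simp add: prod_eq_iff)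
  then have "hamming_dist (fst r) (fst r') \<noteq> 0"
    using assms(1,2) by (simp add: hamming_dist_eq_0_iff)
  then show ?thesis using hamming_dist_le_ham[OF assms(1,2)] by linarith
qed (simp add: ham_def)

lemma ham_commute: "ham d r r' = ham d r' r"
proof -
  have "{j. j < d \<and> fst r ! j \<noteq> fst r' ! j} = {j. j < d \<and> fst r' ! j \<noteq> fst r ! j}"
    by auto
  then show ?thesis by (auto simp: ham_def)
qed

section \<open>Words of bounded length\<close>

lemma cube_Suc: "cube (Suc l) = Cons True ` cube l \<union> Cons False ` cube l"
  by (auto simp: cube_def length_Suc_conv)

lemma cube_eq_lists: "cube l = {xs. set xs \<subseteq> UNIV \<and> length xs = l}"
  by (simp add: cube_def)

lemma finite_cube: "finite (cube l)"
  unfolding cube_eq_lists by (rule finite_lists_length_eq) simp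

lemma card_cube: "card (cube l) = 2 ^ l"
  unfolding cube_eq_lists using card_lists_length_eq[of "UNIV :: bool set" l] by simp

lemma cube_nonempty: "cube l \<noteq> {}"
  by (auto simp: cube_def intro!: exI[of _ "replicate l False"])

lemma sum_cube_exp_hamming_dist:
  fixes c :: real
  shows "l \<le> length x \<Longrightarrow> (\<Sum>p\<in>cube l. exp (- c * hamming_dist x p)) = (1 + exp (- c)) ^ l"
proof (induction l arbitrary: x)
  case 0
  then show ?case by (simp add: cube_def)
next
  case (Suc l)
  then obtain a x' where x: "x = a # x'" and lx: "l \<le> length x'" by (cases x) auto
  have "(\<Sum>p\<in>cube (Suc l). exp (- c * hamming_dist x p))
     = (\<Sum>p\<in>cube l. exp (- c * hamming_dist x (True # p)))
     + (\<Sum>p\<in>cube l. exp (- c * hamming_dist x (False # p)))"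
    unfolding cube_Suc by (subst sum.union_disjoint) (auto simp: finite_cube sum.reindex)
  also have "\<dots> = (\<Sum>p\<in>cube l. (1 + exp (- c)) * exp (- c * hamming_dist x' p))"
    by (cases a) (auto simp: x sum.distrib[symmetric] algebra_simps exp_add[symmetric]
        intro!: sum.cong)
  also have "\<dots> = (1 + exp (- c)) ^ Suc l"
    by (subst sum_distrib_left[symmetric], subst Suc.IH[OF lx]) simp
  finally show ?case .
qed

definition cube_upto :: "nat \<Rightarrow> bool list set" where
  "cube_upto d = {p. length p \<le> d}"

lemma cube_upto_eq_UN: "cube_upto d = (\<Union>l\<le>d. cube l)"
  by (auto simp: cube_upto_def cube_def)

lemma finite_cube_upto: "finite (cube_upto d)"
  unfolding cube_upto_eq_UN by (auto simp: finite_cube)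

lemma cube_upto_nonempty: "cube_upto d \<noteq> {}"
  by (auto simp: cube_upto_def intro!: exI[of _ "[]"])

lemma cube_subset_cube_upto: "cube d \<subseteq> cube_upto d"
  by (auto simp: cube_def cube_upto_def)

lemma sum_cube_upto_exp_hamming_dist:
  fixes c :: real
  assumes "length x = d" "0 \<le> c"
  shows "(\<Sum>p\<in>cube_upto d. exp (- c * hamming_dist x p)) \<le> (real d + 1) * (1 + exp (- c)) ^ d"
proof -
  have "(\<Sum>p\<in>cube_upto d. exp (- c * hamming_dist x p))
      = (\<Sum>l\<le>d. \<Sum>p\<in>cube l. exp (- c * hamming_dist x p))"
    unfolding cube_upto_eq_UN
    by (rule sum.UNION_disjoint) (auto simp: finite_cube finite_cube[unfolded cube_def] cube_def)
  also have "\<dots> = (\<Sum>l\<le>d. (1 + exp (- c)) ^ l)"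
    using assms by (intro sum.cong refl sum_cube_exp_hamming_dist) auto
  also have "\<dots> \<le> (\<Sum>l\<le>d. (1 + exp (- c)) ^ d)"
    by (intro sum_mono power_increasing) auto
  finally show ?thesis by (simp add: add.commute)
qed

lemma one_plus_exp_power_le:
  fixes c :: real
  assumes "1 \<le> d" "ln d \<le> c"
  shows "(1 + exp (- c)) ^ d \<le> exp 1"
proof -
  have "exp (- c) \<le> 1 / d"
    using assms exp_le_cancel_iff[of "- c" "- ln d"] by (simp add: exp_minus inverse_eq_divide)
  have "(1 + exp (- c)) ^ d \<le> exp (exp (- c)) ^ d"
    by (intro power_mono) (auto simp: exp_ge_add_one_self add_nonneg_nonneg)
  also have "\<dots> = exp (d * exp (- c))"
    by (simp add: exp_of_nat_mult[symmetric])
  also have "\<dots> \<le> exp 1"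
    using mult_left_mono[OF \<open>exp (- c) \<le> 1 / d\<close>, of d] assms(1) by simp
  finally show ?thesis .
qed

section \<open>The exponential mechanism\<close>

definition weighted_pmf :: "'a set \<Rightarrow> ('a \<Rightarrow> real) \<Rightarrow> 'a pmf" where
  "weighted_pmf V w = embed_pmf (\<lambda>v. if v \<in> V then w v / sum w V else 0)"

context
  fixes V :: "'a set" and w :: "'a \<Rightarrow> real"
  assumes finite: "finite V" and nonempty: "V \<noteq> {}" and pos: "\<And>v. v \<in> V \<Longrightarrow> 0 < w v"
begin

lemma sum_weights_pos: "0 < sum w V"
  using finite nonempty pos by (simp add: sum_pos)

lemma pmf_weighted_pmf: "pmf (weighted_pmf V w) v = (if v \<in> V then w v / sum w V else 0)"
proof -
  let ?f = "\<lambda>v. if v \<in> V then w v / sum w V else 0"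
  have nonneg: "0 \<le> ?f v" for v
    using pos sum_weights_pos by (auto intro: less_imp_le)
  have "(\<Sum>v\<in>V. ?f v) = 1"
    using sum_weights_pos by (simp add: sum_divide_distrib[symmetric])
  moreover have "(\<integral>\<^sup>+v. ennreal (?f v) \<partial>count_space UNIV) = (\<Sum>v\<in>V. ennreal (?f v))"
    by (rule nn_integral_count_space') (auto simp: finite)
  moreover have "(\<Sum>v\<in>V. ennreal (?f v)) = ennreal (\<Sum>v\<in>V. ?f v)"
    using nonneg by (intro sum_ennreal) blast
  ultimately have "(\<integral>\<^sup>+v. ennreal (?f v) \<partial>count_space UNIV) = 1"
    by simp
  then show ?thesis
    unfolding weighted_pmf_def using nonneg by (subst pmf_embed_pmf) auto
qed

lemma set_pmf_weighted_pmf: "set_pmf (weighted_pmf V w) = V"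
  using pos sum_weights_pos
  by (auto simp: set_pmf_eq pmf_weighted_pmf dest: less_imp_neq[symmetric] split: if_splits)

lemma prob_weighted_pmf: "measure_pmf.prob (weighted_pmf V w) A = (\<Sum>v\<in>A \<inter> V. w v) / sum w V"
proof -
  have "measure_pmf.prob (weighted_pmf V w) A = measure_pmf.prob (weighted_pmf V w) (A \<inter> V)"
    using measure_Int_set_pmf[of "weighted_pmf V w" A] by (simp add: set_pmf_weighted_pmf)
  also have "\<dots> = (\<Sum>v\<in>A \<inter> V. pmf (weighted_pmf V w) v)"
    by (rule measure_measure_pmf_finite) (simp add: finite)
  finally show ?thesis
    by (simp add: pmf_weighted_pmf sum_divide_distrib)
qed

lemma prob_weighted_pmf_le:
  assumes "c \<in> V"
  shows "measure_pmf.prob (weighted_pmf V w) A \<le> (\<Sum>v\<in>A \<inter> V. w v) / w c"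
proof -
  have "w c \<le> sum w V"
    using assms finite pos by (intro member_le_sum) (auto intro: less_imp_le)
  moreover have "0 \<le> (\<Sum>v\<in>A \<inter> V. w v)"
    using pos by (intro sum_nonneg) (auto intro: less_imp_le)
  ultimately show ?thesis
    unfolding prob_weighted_pmf using pos[OF assms] by (intro frac_le) auto
qed

end

lemma prob_weighted_pmf_le_ratio:
  assumes finite: "finite V" and nonempty: "V \<noteq> {}"
    and pos: "\<And>v. v \<in> V \<Longrightarrow> 0 < w v" and pos': "\<And>v. v \<in> V \<Longrightarrow> 0 < w' v"
    and le: "\<And>v. v \<in> V \<Longrightarrow> w v \<le> c * w' v" and le': "\<And>v. v \<in> V \<Longrightarrow> w' v \<le> c * w v"
  shows "measure_pmf.prob (weighted_pmf V w) A \<le> c\<^sup>2 * measure_pmf.prob (weighted_pmf V w') A"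
proof -
  obtain v where "v \<in> V" using nonempty by auto
  then have "0 < c * w' v"
    using le[of v] pos[of v] by linarith
  then have c: "0 < c"
    using pos'[OF \<open>v \<in> V\<close>] by (simp add: zero_less_mult_iff)
  have S: "0 < sum w V" "0 < sum w' V"
    using finite nonempty pos pos' by (auto simp: sum_pos)
  let ?a = "\<Sum>v\<in>A \<inter> V. w v" and ?a' = "\<Sum>v\<in>A \<inter> V. w' v"
  have "?a \<le> c * ?a'"
    unfolding sum_distrib_left using le by (intro sum_mono) auto
  moreover have "sum w' V \<le> c * sum w V"
    unfolding sum_distrib_left using le' by (intro sum_mono) auto
  moreover have "0 \<le> ?a'"
    using pos' by (intro sum_nonneg) (auto intro: less_imp_le)
  ultimately have "?a * sum w' V \<le> (c * ?a') * (c * sum w V)"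
    using c S by (intro mult_mono) auto
  then have "?a / sum w V \<le> c\<^sup>2 * (?a' / sum w' V)"
    using S by (simp add: field_simps power2_eq_square)
  then show ?thesis
    by (simp add: prob_weighted_pmf[OF finite nonempty pos] prob_weighted_pmf[OF finite nonempty pos'])
qed

definition mistakes :: "hyp \<Rightarrow> example set" where
  "mistakes h = {(x, y). h x \<noteq> y}"

lemma err_eq_prob_mistakes: "err h D = measure_pmf.prob D (mistakes h)"
  by (simp add: err_def mistakes_def)

definition emp_err :: "hyp \<Rightarrow> example list \<Rightarrow> nat" where
  "emp_err h Ds = count_in (mistakes h) Ds"

definition index_sets :: "nat \<Rightarrow> nat \<Rightarrow> nat set set" where
  "index_sets t n = {I. I \<subseteq> {..<n} \<and> card I = t}"

definition near_dist :: "nat \<Rightarrow> example list \<Rightarrow> bool list \<Rightarrow> nat" where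
  "near_dist t Ds p = Min ((\<lambda>I. \<Sum>i\<in>I. hamming_dist (fst (Ds ! i)) p) ` index_sets t (length Ds))"

definition score :: "(bool list \<Rightarrow> hyp) \<Rightarrow> nat \<Rightarrow> example list \<Rightarrow> bool list \<Rightarrow> real" where
  "score hyp_of t Ds p = real (emp_err (hyp_of p) Ds) + real (near_dist t Ds p)"

definition exp_mech ::
  "bool list set \<Rightarrow> (bool list \<Rightarrow> hyp) \<Rightarrow> nat \<Rightarrow> real \<Rightarrow> example list \<Rightarrow> hyp pmf" where
  "exp_mech V hyp_of t lam Ds = map_pmf hyp_of (weighted_pmf V (\<lambda>p. exp (- lam * score hyp_of t Ds p)))"

lemma finite_index_sets: "finite (index_sets t n)"
  unfolding index_sets_def by (rule finite_subset[of _ "Pow {..<n}"]) auto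

lemma index_sets_nonempty: "t \<le> n \<Longrightarrow> index_sets t n \<noteq> {}"
  unfolding index_sets_def by (auto intro!: exI[of _ "{..<t}"])

lemma near_dist_le:
  "I \<in> index_sets t (length Ds) \<Longrightarrow> near_dist t Ds p \<le> (\<Sum>i\<in>I. hamming_dist (fst (Ds ! i)) p)"
  unfolding near_dist_def using finite_index_sets by (intro Min_le) auto

lemma obtain_near_dist_indices:
  assumes "t \<le> length Ds"
  obtains I where "I \<in> index_sets t (length Ds)" "near_dist t Ds p = (\<Sum>i\<in>I. hamming_dist (fst (Ds ! i)) p)"
proof -
  have "near_dist t Ds p \<in> (\<lambda>I. \<Sum>i\<in>I. hamming_dist (fst (Ds ! i)) p) ` index_sets t (length Ds)"
    unfolding near_dist_def using finite_index_sets index_sets_nonempty[OF assms] by (intro Min_in) auto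
  then show ?thesis using that by blast
qed

lemma near_dist_le_of_count_in:
  assumes "t \<le> count_in A Ds" "\<And>x y. (x, y) \<in> A \<Longrightarrow> hamming_dist x p \<le> k"
  shows "near_dist t Ds p \<le> t * k"
proof -
  obtain I where I: "I \<subseteq> {..<length Ds}" "card I = t" "\<And>i. i \<in> I \<Longrightarrow> Ds ! i \<in> A"
    using obtain_indices_in[OF assms(1)] by blast
  then have "near_dist t Ds p \<le> (\<Sum>i\<in>I. hamming_dist (fst (Ds ! i)) p)"
    by (intro near_dist_le) (auto simp: index_sets_def)
  also have "\<dots> \<le> (\<Sum>i\<in>I. k)"
    using I assms(2) by (intro sum_mono) (metis prod.collapse)
  finally show ?thesis using I by simp
qed

lemma set_pmf_exp_mech:
  "finite V \<Longrightarrow> V \<noteq> {} \<Longrightarrow> set_pmf (exp_mech V hyp_of t lam Ds) = hyp_of ` V"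
  unfolding exp_mech_def by (simp add: set_pmf_weighted_pmf)

locale neighbours =
  fixes d n i :: nat and Ds Ds' :: "example list"
  assumes length: "length Ds = n" "length Ds' = n" and i: "i < n"
    and records: "\<forall>r\<in>set Ds. record_on d r" "\<forall>r\<in>set Ds'. record_on d r"
    and agree: "\<forall>j<n. j \<noteq> i \<longrightarrow> Ds ! j = Ds' ! j"
begin

lemma length_fst_nth: "j < n \<Longrightarrow> length (fst (Ds ! j)) = d" "j < n \<Longrightarrow> length (fst (Ds' ! j)) = d"
  using records length by (auto simp: record_on_def cube_def)

lemma count_in_le_Suc: "count_in A Ds \<le> count_in A Ds' + 1"
proof -
  have "{j. j < length Ds \<and> Ds ! j \<in> A} \<subseteq> insert i {j. j < length Ds' \<and> Ds' ! j \<in> A}"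
    using agree length by auto
  then have "count_in A Ds \<le> card (insert i {j. j < length Ds' \<and> Ds' ! j \<in> A})"
    unfolding count_in_eq_card by (intro card_mono) auto
  also have "\<dots> \<le> count_in A Ds' + 1"
    by (simp add: card_insert_if count_in_eq_card)
  finally show ?thesis .
qed

lemma near_dist_le_add:
  assumes "t \<le> n"
  shows "near_dist t Ds p \<le> near_dist t Ds' p + hamming_dist (fst (Ds ! i)) (fst (Ds' ! i))"
proof -
  let ?h = "hamming_dist (fst (Ds ! i)) (fst (Ds' ! i))"
  obtain I where I: "I \<in> index_sets t (length Ds')"
      "near_dist t Ds' p = (\<Sum>j\<in>I. hamming_dist (fst (Ds' ! j)) p)"
    using obtain_near_dist_indices[of t Ds' p] assms length by auto
  have I_sub: "I \<subseteq> {..<n}" using I length by (auto simp: index_sets_def)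
  then have "finite I" by (rule finite_subset) simp
  have "near_dist t Ds p \<le> (\<Sum>j\<in>I. hamming_dist (fst (Ds ! j)) p)"
    using I length by (intro near_dist_le) auto
  also have "\<dots> \<le> (\<Sum>j\<in>I. hamming_dist (fst (Ds' ! j)) p + (if j = i then ?h else 0))"
  proof (rule sum_mono)
    fix j assume "j \<in> I"
    then show "hamming_dist (fst (Ds ! j)) p \<le> hamming_dist (fst (Ds' ! j)) p + (if j = i then ?h else 0)"
      using agree I_sub hamming_dist_triangle[of "fst (Ds ! i)" "fst (Ds' ! i)" p] length_fst_nth i
      by auto
  qed
  also have "\<dots> \<le> near_dist t Ds' p + ?h"
    using I \<open>finite I\<close> by (simp add: sum.distrib)
  finally show ?thesis .
qed

lemma score_le_add:
  assumes "t \<le> n"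
  shows "score hyp_of t Ds p \<le> score hyp_of t Ds' p + 2 * ham d (Ds ! i) (Ds' ! i)"
proof (cases "Ds ! i = Ds' ! i")
  case True
  then have "Ds = Ds'" using agree length by (metis nth_equalityI)
  then show ?thesis by simp
next
  case False
  have "emp_err (hyp_of p) Ds \<le> emp_err (hyp_of p) Ds' + 1"
    unfolding emp_err_def by (rule count_in_le_Suc)
  moreover have "near_dist t Ds p \<le> near_dist t Ds' p + ham d (Ds ! i) (Ds' ! i)"
    using near_dist_le_add[OF assms, of p] hamming_dist_le_ham[OF length_fst_nth[OF i]] by linarith
  moreover have "1 \<le> ham d (Ds ! i) (Ds' ! i)"
    using one_le_ham[OF length_fst_nth[OF i] False] .
  ultimately show ?thesis unfolding score_def by linarith
qed

lemma exp_score_le: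
  assumes "t \<le> n" "0 \<le> \<epsilon>"
  shows "exp (- (\<epsilon> / 4) * score hyp_of t Ds' p)
       \<le> exp (\<epsilon> / 2 * ham d (Ds ! i) (Ds' ! i)) * exp (- (\<epsilon> / 4) * score hyp_of t Ds p)"
proof -
  have "\<epsilon> / 4 * score hyp_of t Ds p \<le> \<epsilon> / 4 * (score hyp_of t Ds' p + 2 * ham d (Ds ! i) (Ds' ! i))"
    using score_le_add[OF assms(1)] assms(2) by (intro mult_left_mono) auto
  then show ?thesis by (simp add: exp_add[symmetric] algebra_simps)
qed

end

lemma neighbours_swap: "neighbours d n i Ds Ds' \<Longrightarrow> neighbours d n i Ds' Ds"
  unfolding neighbours_def by auto

lemma exp_mech_dp:
  assumes "finite V" "V \<noteq> {}" "t \<le> n" "0 \<le> \<epsilon>"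
  shows "nabla0_dp d n \<epsilon> (exp_mech V hyp_of t (\<epsilon> / 4))"
  unfolding nabla0_dp_def
proof (intro allI impI)
  fix Ds Ds' i S
  assume "length Ds = n \<and> length Ds' = n \<and> i < n \<and> (\<forall>r\<in>set Ds. record_on d r) \<and>
       (\<forall>r\<in>set Ds'. record_on d r) \<and> (\<forall>j<n. j \<noteq> i \<longrightarrow> Ds ! j = Ds' ! j)"
  then interpret N: neighbours d n i Ds Ds' by unfold_locales auto
  interpret N': neighbours d n i Ds' Ds by (rule neighbours_swap) unfold_locales
  let ?h = "real (ham d (Ds ! i) (Ds' ! i))"
  have "measure_pmf.prob (weighted_pmf V (\<lambda>p. exp (- (\<epsilon> / 4) * score hyp_of t Ds p))) (hyp_of -` S)
      \<le> (exp (\<epsilon> / 2 * ?h))\<^sup>2 * measure_pmf.prob (weighted_pmf V (\<lambda>p. exp (- (\<epsilon> / 4) * score hyp_of t Ds' p))) (hyp_of -` S)"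
    using N.exp_score_le[OF assms(3,4)] N'.exp_score_le[OF assms(3,4)]
    by (intro prob_weighted_pmf_le_ratio assms(1,2)) (auto simp: ham_commute)
  also have "(exp (\<epsilon> / 2 * ?h))\<^sup>2 = exp (\<epsilon> * ?h)"
    by (simp add: power2_eq_square exp_add[symmetric])
  finally show "measure_pmf.prob (exp_mech V hyp_of t (\<epsilon> / 4) Ds) S
      \<le> exp (\<epsilon> * ?h) * measure_pmf.prob (exp_mech V hyp_of t (\<epsilon> / 4) Ds') S"
    unfolding exp_mech_def by simp
qed

lemma exp_mech_prob_bad_le:
  assumes "finite V" "V \<noteq> {}" "c \<in> V" "0 \<le> lam"
    and bad: "\<And>p. p \<in> V \<Longrightarrow> hyp_of p \<notin> G \<Longrightarrow> A \<le> real (emp_err (hyp_of p) Ds)"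
  shows "measure_pmf.prob (exp_mech V hyp_of t lam Ds) (- G)
     \<le> exp (- lam * A) * (\<Sum>p\<in>V. exp (- lam * near_dist t Ds p)) / exp (- lam * score hyp_of t Ds c)"
proof -
  let ?w = "\<lambda>p. exp (- lam * score hyp_of t Ds p)"
  have "measure_pmf.prob (exp_mech V hyp_of t lam Ds) (- G)
      = measure_pmf.prob (weighted_pmf V ?w) (hyp_of -` (- G))"
    unfolding exp_mech_def by simp
  also have "\<dots> \<le> (\<Sum>p\<in>hyp_of -` (- G) \<inter> V. ?w p) / ?w c"
    by (rule prob_weighted_pmf_le) (use assms in auto)
  also have "(\<Sum>p\<in>hyp_of -` (- G) \<inter> V. ?w p)
      \<le> (\<Sum>p\<in>hyp_of -` (- G) \<inter> V. exp (- lam * A) * exp (- lam * near_dist t Ds p))"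
  proof (rule sum_mono)
    fix p assume "p \<in> hyp_of -` (- G) \<inter> V"
    then have "lam * A \<le> lam * real (emp_err (hyp_of p) Ds)"
      using bad assms(4) by (intro mult_left_mono) auto
    then show "?w p \<le> exp (- lam * A) * exp (- lam * near_dist t Ds p)"
      unfolding score_def by (simp add: exp_add[symmetric] algebra_simps)
  qed
  also have "\<dots> \<le> (\<Sum>p\<in>V. exp (- lam * A) * exp (- lam * near_dist t Ds p))"
    by (rule sum_mono2) (use assms in auto)
  finally show ?thesis
    by (simp add: sum_distrib_left divide_right_mono)
qed

lemma exp_neg_sum_le_mean:
  fixes a :: "nat \<Rightarrow> real"
  assumes "finite I" "card I = t" "1 \<le> t"
  shows "exp (- lam * (\<Sum>i\<in>I. a i)) \<le> (1 / t) * (\<Sum>i\<in>I. exp (- lam * t * a i))"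
proof -
  have "I \<noteq> {}" using assms by auto
  then have "exp (\<Sum>i\<in>I. (1 / t) *\<^sub>R (- lam * t * a i)) \<le> (\<Sum>i\<in>I. (1 / t) * exp (- lam * t * a i))"
    using assms by (intro convex_on_sum[OF assms(1) _ exp_convex]) auto
  moreover have "(\<Sum>i\<in>I. (1 / t) *\<^sub>R (- lam * t * a i)) = - lam * (\<Sum>i\<in>I. a i)"
    using assms by (simp add: sum_distrib_left)
  ultimately show ?thesis by (simp add: sum_distrib_left)
qed

lemma exp_near_dist_le_mean:
  fixes lam :: real
  assumes "1 \<le> t" "t \<le> length Ds"
  shows "exp (- lam * near_dist t Ds p)
      \<le> (1 / t) * (\<Sum>i<length Ds. exp (- lam * t * hamming_dist (fst (Ds ! i)) p))"
proof -
  obtain I where I: "I \<in> index_sets t (length Ds)"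
      "near_dist t Ds p = (\<Sum>i\<in>I. hamming_dist (fst (Ds ! i)) p)"
    using obtain_near_dist_indices[OF assms(2)] by blast
  then have I_sub: "I \<subseteq> {..<length Ds}" and "card I = t"
    by (auto simp: index_sets_def)
  then have "exp (- lam * near_dist t Ds p)
      \<le> (1 / t) * (\<Sum>i\<in>I. exp (- lam * t * hamming_dist (fst (Ds ! i)) p))"
    using I(2) exp_neg_sum_le_mean[of I t lam "\<lambda>i. real (hamming_dist (fst (Ds ! i)) p)"]
      finite_subset[OF I_sub] assms(1) by simp
  also have "\<dots> \<le> (1 / t) * (\<Sum>i<length Ds. exp (- lam * t * hamming_dist (fst (Ds ! i)) p))"
    by (intro mult_left_mono sum_mono2 I_sub) auto
  finally show ?thesis .
qed

text \<open>Summing the previous bound over \<open>p\<close> turns the normalising constant of the distance term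
  into an average of generating functions of Hamming distances, each at most \<open>(d + 1) e\<close> once
  \<open>lam t \<ge> ln d\<close>.\<close>

lemma sum_exp_near_dist_le:
  fixes lam :: real
  assumes "V \<subseteq> cube_upto d" and Ds: "\<And>r. r \<in> set Ds \<Longrightarrow> fst r \<in> cube d"
    and "1 \<le> d" "1 \<le> t" "t \<le> length Ds" "0 \<le> lam" "ln d \<le> lam * t"
  shows "(\<Sum>p\<in>V. exp (- lam * near_dist t Ds p)) \<le> length Ds / t * ((real d + 1) * exp 1)"
proof -
  have point: "(\<Sum>p\<in>V. exp (- lam * t * hamming_dist (fst (Ds ! i)) p)) \<le> (real d + 1) * exp 1"
    if "i < length Ds" for i
  proof -
    have "length (fst (Ds ! i)) = d" using Ds that by (auto simp: cube_def)
    then have "(\<Sum>p\<in>cube_upto d. exp (- (lam * t) * hamming_dist (fst (Ds ! i)) p))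
        \<le> (real d + 1) * (1 + exp (- (lam * t))) ^ d"
      using assms(6) sum_cube_upto_exp_hamming_dist[of "fst (Ds ! i)" d "lam * t"] by simp
    also have "\<dots> \<le> (real d + 1) * exp 1"
      using one_plus_exp_power_le[of d "lam * t"] assms(3,7) by (intro mult_left_mono) auto
    finally show ?thesis
      using sum_mono2[OF finite_cube_upto assms(1), of "\<lambda>p. exp (- (lam * t) * hamming_dist (fst (Ds ! i)) p)"]
      by (simp add: algebra_simps)
  qed
  have "(\<Sum>p\<in>V. exp (- lam * near_dist t Ds p))
      \<le> (1 / t) * (\<Sum>i<length Ds. \<Sum>p\<in>V. exp (- lam * t * hamming_dist (fst (Ds ! i)) p))"
    using sum_mono[of V, OF exp_near_dist_le_mean[OF assms(4,5)]]
    by (simp add: sum_distrib_left sum.swap[of _ V])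
  also have "\<dots> \<le> (1 / t) * (\<Sum>i<length Ds. (real d + 1) * exp 1)"
    using point by (intro mult_left_mono sum_mono) auto
  finally show ?thesis by simp
qed

lemma prob_bind_pmf_finite:
  assumes "finite (set_pmf M)"
  shows "measure_pmf.prob (bind_pmf M f) S = (\<Sum>x\<in>set_pmf M. pmf M x * measure_pmf.prob (f x) S)"
proof -
  have "ennreal (measure_pmf.prob (bind_pmf M f) S)
      = (\<integral>\<^sup>+x. ennreal (measure_pmf.prob (f x) S) \<partial>measure_pmf M)"
    by (simp add: measure_pmf.emeasure_eq_measure[symmetric])
  also have "\<dots> = ennreal (\<Sum>x\<in>set_pmf M. pmf M x * measure_pmf.prob (f x) S)"
    using assms by (simp add: nn_integral_measure_pmf_finite sum_ennreal[symmetric] ennreal_mult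
        mult.commute)
  finally show ?thesis
    by (simp add: sum_nonneg)
qed

lemma prob_ge_of_compl_le:
  "measure_pmf.prob M (- G) \<le> 1 / 20 \<Longrightarrow> 19 / 20 \<le> measure_pmf.prob M G"
  using measure_pmf.prob_compl[of G M] by (simp add: Compl_eq_Diff_UNIV)

lemma pac_of_failure_event:
  assumes fin: "finite (set_pmf D)" and F: "measure_pmf.prob (iid D n) F \<le> 1 / 20"
    and M: "\<And>Ds. Ds \<in> set_pmf (iid D n) \<Longrightarrow> Ds \<notin> F \<Longrightarrow> measure_pmf.prob (M Ds) (- G) \<le> 1 / 20"
  shows "0.9 \<le> measure_pmf.prob (bind_pmf (iid D n) M) G"
proof -
  let ?P = "iid D n"
  let ?S = "set_pmf ?P"
  have fin_S: "finite ?S" using fin by (rule finite_set_pmf_iid)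
  have "measure_pmf.prob ?P (- F) = measure_pmf.prob ?P (?S - F)"
    using measure_Int_set_pmf[of ?P "- F"] by (simp add: Diff_eq Int_commute)
  also have "\<dots> = (\<Sum>x\<in>?S - F. pmf ?P x)"
    using fin_S by (simp add: measure_measure_pmf_finite)
  finally have "measure_pmf.prob ?P (- F) * (19 / 20) = (\<Sum>x\<in>?S - F. pmf ?P x * (19 / 20))"
    by (simp only: sum_distrib_right)
  also have "\<dots> \<le> (\<Sum>x\<in>?S - F. pmf ?P x * measure_pmf.prob (M x) G)"
    using M by (intro sum_mono mult_left_mono prob_ge_of_compl_le) auto
  also have "\<dots> \<le> (\<Sum>x\<in>?S. pmf ?P x * measure_pmf.prob (M x) G)"
    using fin_S by (intro sum_mono2) auto
  also have "\<dots> = measure_pmf.prob (bind_pmf ?P M) G"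
    by (rule prob_bind_pmf_finite[OF fin_S, symmetric])
  finally show ?thesis
    using prob_ge_of_compl_le[of ?P "- F"] F by simp
qed

section \<open>Choice of parameters\<close>

text \<open>The score sums the distances to the \<open>t\<close> nearest sample points, and \<open>r\<close> is a Hamming
  radius with \<open>2 ^ r \<ge> 64 / \<alpha>\<close>, so that every \<open>r\<close>-ball of the cube contains a point of
  mass at most \<open>\<alpha> / 64\<close>.\<close>

locale learner_params =
  fixes \<epsilon> \<alpha> :: real and d t r n :: nat
  assumes eps: "0 < \<epsilon>" "\<epsilon> \<le> 1" and alpha: "0 < \<alpha>" "\<alpha> < 1" and d: "1 \<le> d"
    and t: "ln (real d + 1) + ln (1 / \<alpha>) + 5 \<le> \<epsilon> / 4 * t"
    and r: "64 / \<alpha> \<le> 2 ^ r" "1 \<le> r"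
    and n: "64 * t * r \<le> \<alpha> * n" "\<alpha> * n \<le> 65 * t * r"
begin

lemma ln_terms_nonneg: "0 \<le> ln (1 / \<alpha>)" "0 \<le> ln (real d + 1)" "ln d \<le> ln (real d + 1)"
  using alpha d by simp_all

lemma t_ge_1: "1 \<le> t"
proof -
  have "5 \<le> \<epsilon> / 4 * t" using t ln_terms_nonneg by linarith
  also have "\<dots> \<le> t / 4" using eps mult_right_mono[of \<epsilon> 1 "real t"] by simp
  finally show ?thesis by simp
qed

lemma t_le: "real t \<le> \<alpha> * n / 64"
  using n(1) mult_left_mono[of 1 "real r" "real t"] r(2) by simp

lemma t_le_n: "t \<le> n"
  using t_le mult_left_le_one_le[of n \<alpha>] alpha by simp

lemma exp_neg_le_tiny: "\<alpha> / 128 \<le> c \<Longrightarrow> exp (- c * n) \<le> \<alpha> / 1000"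
proof -
  assume c: "\<alpha> / 128 \<le> c"
  have "ln (1 / \<alpha>) + 10 \<le> 2 * (\<epsilon> / 4 * t)"
    using t ln_terms_nonneg by linarith
  also have "\<dots> \<le> \<alpha> * n / 128"
    using t_le eps mult_right_mono[of \<epsilon> 1 "real t"] by simp
  also have "\<dots> \<le> c * n"
    using c mult_right_mono[of "\<alpha> / 128" c "real n"] by simp
  finally have "exp (- c * n) \<le> exp (- ln (1 / \<alpha>) - 10)" by simp
  also have "\<dots> = \<alpha> * exp (- 10)"
    using alpha by (simp add: exp_diff exp_minus ln_div divide_inverse)
  also have "\<dots> \<le> \<alpha> / 1000"
    using two_power_le_exp[of 10] alpha by (simp add: exp_minus field_simps)
  finally show ?thesis .
qed

lemma few_hits_unlikely:
  assumes "finite (set_pmf D)" "\<alpha> / 16 \<le> q" "q \<le> measure_pmf.prob D A"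
  shows "measure_pmf.prob (iid D n) {xs. real (count_in A xs) \<le> q * n / 2} \<le> \<alpha> / 1000"
  using count_in_lower_tail[OF assms(1) _ assms(3), of n] exp_neg_le_tiny[of "q / 8"] assms(2) alpha
  by simp

lemma many_hits_unlikely:
  assumes "finite (set_pmf D)" "\<alpha> / 64 \<le> q" "measure_pmf.prob D A \<le> q"
  shows "measure_pmf.prob (iid D n) {xs. 3 * q * n \<le> real (count_in A xs)} \<le> \<alpha> / 1000"
  using count_in_upper_tail[OF assms(1) _ assms(3), of n] exp_neg_le_tiny[of "q / 2"] assms(2) alpha
  by simp

lemma exp_mech_tail_numeric:
  "exp (- (\<epsilon> / 4) * (\<alpha> * n / 16)) * (n / t * ((real d + 1) * exp 1)) \<le> 1 / 20"
proof -
  define X where "X = real d + 1"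
  have X: "0 < X" by (simp add: X_def)
  define L where "L = ln X + ln (1 / \<alpha>) + 5"
  have L5: "5 \<le> L" and tL: "L \<le> \<epsilon> / 4 * t"
    using t ln_terms_nonneg by (simp_all add: L_def X_def)
  have r1: "1 \<le> real r" using r(2) by simp
  have "L + 15 * real r \<le> 4 * r * L"
    using mult_nonneg_nonneg[of "4 * r - 1" "L - 5"] L5 r1 by (simp add: algebra_simps)
  also have "\<dots> \<le> 4 * r * (\<epsilon> / 4 * t)"
    using tL r1 by (intro mult_left_mono) auto
  also have "\<dots> = \<epsilon> / 4 * (64 * t * r) / 16"
    by (simp add: algebra_simps)
  also have "\<dots> \<le> \<epsilon> / 4 * (\<alpha> * n) / 16"
    using n(1) eps by (intro divide_right_mono mult_left_mono) auto
  finally have "exp (- (\<epsilon> / 4) * (\<alpha> * n / 16)) \<le> exp (- L) * exp (- 15 * real r)"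
    by (simp add: exp_add[symmetric])
  also have "exp (- L) = \<alpha> / X * exp (- 5)"
    using alpha by (simp add: L_def X_def exp_diff exp_add exp_minus ln_div field_simps)
  finally have exp_le: "exp (- (\<epsilon> / 4) * (\<alpha> * n / 16)) \<le> \<alpha> / X * exp (- 5) * exp (- 15 * real r)" .
  have n_le: "real n / t \<le> 65 * r / \<alpha>"
    using n(2) t_ge_1 alpha by (simp add: field_simps)
  have "exp (- (\<epsilon> / 4) * (\<alpha> * n / 16)) * (n / t * (X * exp 1))
      \<le> (\<alpha> / X * exp (- 5) * exp (- 15 * real r)) * (65 * r / \<alpha> * (X * exp 1))"
    using exp_le n_le alpha X by (intro mult_mono) auto
  also have "\<dots> = 65 * (r * exp (- 15 * real r)) * exp (- 4)"
    using alpha X by (simp add: field_simps exp_add[symmetric])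
  also have "\<dots> \<le> 65 * exp (- 14) * exp (- 4)"
  proof -
    have "r * exp (- 15 * real r) \<le> exp (real r) * exp (- 15 * real r)"
      using exp_ge_add_one_self[of "real r"] by (intro mult_right_mono) (linarith, simp)
    also have "\<dots> \<le> exp (- 14)"
      using r1 by (simp add: exp_add[symmetric])
    finally show ?thesis by simp
  qed
  also have "\<dots> \<le> 1 / 20"
    using two_power_le_exp[of 18] by (simp add: mult.assoc exp_add[symmetric] exp_minus field_simps)
  finally show ?thesis by (simp add: X_def)
qed

lemma exp_mech_errs_rarely:
  assumes V: "finite V" "V \<noteq> {}" "V \<subseteq> cube_upto d"
    and Ds: "length Ds = n" "\<And>r. r \<in> set Ds \<Longrightarrow> fst r \<in> cube d"
    and c: "c \<in> V" "score hyp_of t Ds c \<le> B"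
    and bad: "\<And>p. p \<in> V \<Longrightarrow> hyp_of p \<notin> G \<Longrightarrow> A \<le> real (emp_err (hyp_of p) Ds)"
    and gap: "\<alpha> * n / 16 \<le> A - B"
  shows "measure_pmf.prob (exp_mech V hyp_of t (\<epsilon> / 4) Ds) (- G) \<le> 1 / 20"
proof -
  let ?lam = "\<epsilon> / 4"
  let ?Z = "\<Sum>p\<in>V. exp (- ?lam * near_dist t Ds p)"
  have lam: "0 \<le> ?lam" using eps by simp
  have "measure_pmf.prob (exp_mech V hyp_of t ?lam Ds) (- G)
      \<le> exp (- ?lam * A) * ?Z / exp (- ?lam * score hyp_of t Ds c)"
    by (rule exp_mech_prob_bad_le[OF V(1,2) c(1) lam bad])
  also have "\<dots> \<le> exp (- ?lam * A) * ?Z / exp (- ?lam * B)"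
    using c(2) lam by (intro divide_left_mono) (auto intro!: mult_left_mono mult_nonneg_nonneg sum_nonneg)
  also have "\<dots> = exp (- ?lam * (A - B)) * ?Z"
  proof -
    have "exp (- ?lam * A) / exp (- ?lam * B) = exp (- ?lam * (A - B))"
      by (subst exp_diff[symmetric]) (simp add: field_simps)
    then show ?thesis by (simp only: times_divide_eq_left[symmetric] mult.commute)
  qed
  also have "\<dots> \<le> exp (- ?lam * (\<alpha> * n / 16)) * (n / t * ((real d + 1) * exp 1))"
  proof (intro mult_mono)
    show "exp (- ?lam * (A - B)) \<le> exp (- ?lam * (\<alpha> * n / 16))"
      using mult_left_mono[OF gap lam] by simp
    have "ln d \<le> ?lam * t"
      using t ln_terms_nonneg by linarith
    then have "?Z \<le> length Ds / t * ((real d + 1) * exp 1)"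
      using V(3) Ds d t_ge_1 t_le_n lam by (intro sum_exp_near_dist_le) auto
    then show "?Z \<le> n / t * ((real d + 1) * exp 1)"
      using Ds(1) by simp
  qed (auto intro: sum_nonneg)
  also have "\<dots> \<le> 1 / 20"
    by (rule exp_mech_tail_numeric)
  finally show ?thesis .
qed

end

section \<open>Samples from a realizable distribution\<close>

lemma finite_set_pmf_if_distr_on: "distr_on d D \<Longrightarrow> finite (set_pmf D)"
  by (rule finite_subset[of _ "cube d \<times> UNIV"]) (auto simp: distr_on_def finite_cube)

lemma sample_in_cube:
  "distr_on d D \<Longrightarrow> Ds \<in> set_pmf (iid D n) \<Longrightarrow> length Ds = n \<and> (\<forall>r\<in>set Ds. fst r \<in> cube d)"
  using set_pmf_iid by (fastforce simp: distr_on_def)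

lemma count_in_mono_sample:
  "Ds \<in> set_pmf (iid D n) \<Longrightarrow> A \<inter> set_pmf D \<subseteq> B \<Longrightarrow> count_in A Ds \<le> count_in B Ds"
  using set_pmf_iid by (intro count_in_mono) blast

lemma prob_Un_le: "measure_pmf.prob M (A \<union> B) \<le> measure_pmf.prob M A + measure_pmf.prob M B"
  by (rule measure_subadditive) (simp_all add: measure_pmf.emeasure_eq_measure)

lemma prob_mistakes_target:
  assumes "\<And>x y. (x, y) \<in> set_pmf D \<Longrightarrow> y = h x"
  shows "measure_pmf.prob D (mistakes h) = 0"
proof -
  have "mistakes h \<inter> set_pmf D = {}"
    using assms by (auto simp: mistakes_def)
  then show ?thesis
    using measure_Int_set_pmf[of D "mistakes h"] by simp
qed

lemma emp_err_target:
  assumes "\<And>x y. (x, y) \<in> set_pmf D \<Longrightarrow> y = h x" "Ds \<in> set_pmf (iid D n)"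
  shows "emp_err h Ds = 0"
  using count_in_mono_sample[OF assms(2), of "mistakes h" "{}"] assms(1)
  by (auto simp: emp_err_def mistakes_def count_in_def)

lemma sum_prob_fst_eq_le_1:
  "finite B \<Longrightarrow> (\<Sum>v\<in>B. measure_pmf.prob D {(x, y). x = v}) \<le> 1"
  by (subst measure_pmf.finite_measure_finite_Union[symmetric])
    (auto simp: disjoint_family_on_def)

lemma exists_le_inverse_card:
  fixes q :: "'a \<Rightarrow> real"
  assumes "finite B" "B \<noteq> {}" "(\<Sum>v\<in>B. q v) \<le> 1"
  shows "\<exists>v\<in>B. q v \<le> 1 / card B"
proof (rule ccontr)
  assume "\<not> ?thesis"
  then have "(\<Sum>v\<in>B. 1 / card B) < (\<Sum>v\<in>B. q v)"
    using assms by (intro sum_strict_mono) auto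
  then show False using assms by simp
qed

section \<open>Point functions\<close>

context learner_params
begin

definition point_learner :: "example list \<Rightarrow> hyp pmf" where
  "point_learner = exp_mech (cube d) point_fn t (\<epsilon> / 4)"

lemma point_learner_dp: "nabla0_dp d n \<epsilon> point_learner"
  unfolding point_learner_def using finite_cube cube_nonempty t_le_n eps by (intro exp_mech_dp) auto

lemma point_learner_proper: "proper (point_class d) point_learner"
  unfolding proper_def point_learner_def
  by (auto simp: set_pmf_exp_mech finite_cube cube_nonempty point_class_def)

end

locale point_target = learner_params +
  fixes D :: "example pmf" and u :: "bool list"
  assumes distr: "distr_on d D" and u: "u \<in> cube d"
    and label: "\<And>x y. (x, y) \<in> set_pmf D \<Longrightarrow> y = point_fn u x"
begin

abbreviation "pos_examples \<equiv> {(x :: bool list, y :: bool). y}"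
abbreviation "examples_at v \<equiv> {(x :: bool list, y :: bool). x = v}"
abbreviation "good_hyps \<equiv> {h. err h D \<le> \<alpha>}"

lemma finite_D: "finite (set_pmf D)"
  using distr by (rule finite_set_pmf_if_distr_on)

lemma prob_mistakes_point_fn_le:
  "measure_pmf.prob D (mistakes (point_fn v)) \<le> measure_pmf.prob D pos_examples + measure_pmf.prob D (examples_at v)"
proof -
  have "measure_pmf.prob D (mistakes (point_fn v)) \<le> measure_pmf.prob D (pos_examples \<union> examples_at v)"
    by (rule measure_pmf.finite_measure_mono) (auto simp: mistakes_def point_fn_def)
  also have "\<dots> \<le> measure_pmf.prob D pos_examples + measure_pmf.prob D (examples_at v)"
    by (rule prob_Un_le)
  finally show ?thesis .
qed

lemma count_positive_le_emp_err:
  "Ds \<in> set_pmf (iid D n) \<Longrightarrow> v \<noteq> u \<Longrightarrow> count_in pos_examples Ds \<le> emp_err (point_fn v) Ds"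
  unfolding emp_err_def using label
  by (intro count_in_mono_sample) (auto simp: mistakes_def point_fn_def)

lemma near_dist_target:
  assumes "Ds \<in> set_pmf (iid D n)" "t \<le> count_in pos_examples Ds"
  shows "near_dist t Ds u = 0"
proof -
  have "t \<le> count_in (pos_examples \<inter> set_pmf D) Ds"
    using count_in_mono_sample[OF assms(1), of pos_examples "pos_examples \<inter> set_pmf D"] assms(2)
    by auto
  moreover have "x = u" if "(x, True) \<in> set_pmf D" for x
    using label[OF that] by (simp add: point_fn_def)
  ultimately have "near_dist t Ds u \<le> t * 0"
    by (intro near_dist_le_of_count_in) auto
  then show ?thesis by simp
qed

lemma pac_if_many_positives:
  assumes "\<alpha> / 8 \<le> measure_pmf.prob D pos_examples"
  shows "0.9 \<le> measure_pmf.prob (bind_pmf (iid D n) point_learner) good_hyps"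
proof (rule pac_of_failure_event[OF finite_D])
  let ?F = "{Ds. real (count_in pos_examples Ds) \<le> \<alpha> / 8 * n / 2}"
  show "measure_pmf.prob (iid D n) ?F \<le> 1 / 20"
    using few_hits_unlikely[OF finite_D _ assms] alpha by simp
  fix Ds assume Ds: "Ds \<in> set_pmf (iid D n)" "Ds \<notin> ?F"
  then have many: "\<alpha> * n / 16 < count_in pos_examples Ds" by auto
  show "measure_pmf.prob (point_learner Ds) (- good_hyps) \<le> 1 / 20"
    unfolding point_learner_def
  proof (rule exp_mech_errs_rarely[OF finite_cube cube_nonempty cube_subset_cube_upto _ _ u])
    show "length Ds = n" "\<And>r. r \<in> set Ds \<Longrightarrow> fst r \<in> cube d"
      using sample_in_cube[OF distr Ds(1)] by auto
    show "score point_fn t Ds u \<le> 0"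
      using emp_err_target[OF label Ds(1)] near_dist_target[OF Ds(1)] many t_le
      by (simp add: score_def)
    fix p assume "p \<in> cube d" "point_fn p \<notin> good_hyps"
    then have "p \<noteq> u"
      using prob_mistakes_target[OF label] alpha by (auto simp: err_eq_prob_mistakes)
    then show "\<alpha> * n / 16 \<le> real (emp_err (point_fn p) Ds)"
      using count_positive_le_emp_err[OF Ds(1)] many by (smt (verit) of_nat_le_iff)
  qed simp
qed

abbreviation "bad_points \<equiv> {v \<in> cube d. \<alpha> < measure_pmf.prob D (mistakes (point_fn v))}"

lemma pac_if_no_bad_points:
  assumes "bad_points = {}"
  shows "0.9 \<le> measure_pmf.prob (bind_pmf (iid D n) point_learner) good_hyps"
proof (rule pac_of_failure_event[OF finite_D, where F = "{}"])
  fix Ds assume Ds: "Ds \<in> set_pmf (iid D n)"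
  show "measure_pmf.prob (point_learner Ds) (- good_hyps) \<le> 1 / 20"
    unfolding point_learner_def using sample_in_cube[OF distr Ds] assms
    by (intro exp_mech_errs_rarely[OF finite_cube cube_nonempty cube_subset_cube_upto _ _ u order.refl,
        where A = "score point_fn t Ds u + \<alpha> * n / 16"])
      (auto simp: err_eq_prob_mistakes)
qed simp

lemma exists_light_point_near:
  assumes "v \<in> cube d"
  obtains w where "w \<in> cube d" "hamming_dist v w \<le> r"
    "w = u \<or> measure_pmf.prob D (examples_at w) \<le> \<alpha> / 64"
proof (cases "r \<le> d")
  case True
  let ?B = "(\<lambda>w. w @ drop r v) ` cube r"
  have "inj_on (\<lambda>w. w @ drop r v) (cube r)"
    by (rule inj_onI) (auto simp: cube_def)
  then have card_B: "card ?B = 2 ^ r"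
    by (simp add: card_image card_cube)
  have "finite ?B" by (simp add: finite_cube)
  then have "\<exists>w\<in>?B. measure_pmf.prob D (examples_at w) \<le> 1 / card ?B"
    by (intro exists_le_inverse_card sum_prob_fst_eq_le_1) (simp_all add: cube_nonempty)
  then obtain w where w: "w \<in> ?B" "measure_pmf.prob D (examples_at w) \<le> 1 / 2 ^ r"
    using card_B by auto
  moreover have "1 / (2::real) ^ r \<le> \<alpha> / 64"
    using r(1) alpha by (simp add: field_simps)
  moreover obtain w' where w': "w' \<in> cube r" "w = w' @ drop r v"
    using w by auto
  moreover have "length (take r v) = length w'"
    using True assms w'(1) by (simp add: cube_def)
  then have "hamming_dist v w = hamming_dist (take r v) w'"
    using hamming_dist_append[of "take r v" w' "drop r v" "drop r v"] w'(2) by simp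
  then have "hamming_dist v w \<le> r"
    using hamming_dist_le_length[of "take r v" w'] w'(1) by (simp add: cube_def)
  moreover have "w \<in> cube d"
    using True assms w' by (simp add: cube_def)
  ultimately show ?thesis
    using that by simp
next
  case False
  then have "hamming_dist v u \<le> r"
    using hamming_dist_le_length[of v u] u by (simp add: cube_def)
  then show ?thesis using that u by blast
qed

context
  assumes few: "measure_pmf.prob D pos_examples < \<alpha> / 8"
begin

lemma heavy_if_bad: "v \<in> bad_points \<Longrightarrow> 7 * \<alpha> / 8 < measure_pmf.prob D (examples_at v)"
  using prob_mistakes_point_fn_le[of v] few by auto

lemma card_bad_points: "real (card bad_points) * \<alpha> \<le> 2"
proof -
  have "real (card bad_points) * (7 * \<alpha> / 8) \<le> (\<Sum>v\<in>bad_points. measure_pmf.prob D (examples_at v))"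
    using heavy_if_bad sum_mono[of bad_points "\<lambda>_. 7 * \<alpha> / 8"] by (simp add: less_imp_le)
  also have "\<dots> \<le> 1"
    by (rule sum_prob_fst_eq_le_1) (simp add: finite_cube)
  finally show ?thesis using alpha by simp
qed

lemma prob_bad_points_few_mistakes:
  "measure_pmf.prob (iid D n)
     (\<Union>v\<in>bad_points. {Ds. real (count_in (mistakes (point_fn v)) Ds) \<le> \<alpha> * n / 2}) \<le> 2 / 1000"
proof -
  have "measure_pmf.prob (iid D n)
     (\<Union>v\<in>bad_points. {Ds. real (count_in (mistakes (point_fn v)) Ds) \<le> \<alpha> * n / 2})
      \<le> (\<Sum>v\<in>bad_points. measure_pmf.prob (iid D n)
            {Ds. real (count_in (mistakes (point_fn v)) Ds) \<le> \<alpha> * n / 2})"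
    by (rule measure_pmf.finite_measure_subadditive_finite) (auto simp: finite_cube)
  also have "\<dots> \<le> (\<Sum>v\<in>bad_points. \<alpha> / 1000)"
    using few_hits_unlikely[OF finite_D, of \<alpha>] alpha by (intro sum_mono) auto
  also have "\<dots> \<le> 2 / 1000"
    using card_bad_points by (simp add: mult.commute)
  finally show ?thesis .
qed

lemma point_learner_errs_rarely:
  assumes Ds: "Ds \<in> set_pmf (iid D n)" and w: "w \<in> cube d" "hamming_dist v0 w \<le> r"
    and bad: "\<And>v. v \<in> bad_points \<Longrightarrow> \<alpha> * n / 2 < emp_err (point_fn v) Ds"
    and near: "7 * \<alpha> / 8 * n / 2 < count_in (examples_at v0) Ds"
    and good: "emp_err (point_fn w) Ds < 3 * (9 * \<alpha> / 64) * n"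
  shows "measure_pmf.prob (point_learner Ds) (- good_hyps) \<le> 1 / 20"
proof -
  have "t \<le> count_in (examples_at v0) Ds"
    using near t_le alpha by simp
  then have "near_dist t Ds w \<le> t * r"
    using w(2) by (intro near_dist_le_of_count_in) auto
  then have "real (near_dist t Ds w) \<le> \<alpha> * n / 64"
    using n(1) by (simp add: of_nat_mult[symmetric] del: of_nat_mult)
  then have "score point_fn t Ds w \<le> 7 * \<alpha> * n / 16"
    using good by (simp add: score_def)
  then show ?thesis
    unfolding point_learner_def using sample_in_cube[OF distr Ds] bad
    by (intro exp_mech_errs_rarely[OF finite_cube cube_nonempty cube_subset_cube_upto _ _ w(1),
        where A = "\<alpha> * n / 2"])
      (auto simp: err_eq_prob_mistakes less_imp_le)
qed

lemma pac_if_few_positives: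
  assumes v0: "v0 \<in> bad_points"
  shows "0.9 \<le> measure_pmf.prob (bind_pmf (iid D n) point_learner) good_hyps"
proof -
  obtain w where w: "w \<in> cube d" "hamming_dist v0 w \<le> r"
      "w = u \<or> measure_pmf.prob D (examples_at w) \<le> \<alpha> / 64"
    using exists_light_point_near[of v0] v0 by auto
  have err_w: "measure_pmf.prob D (mistakes (point_fn w)) \<le> 9 * \<alpha> / 64"
    using w(3) prob_mistakes_point_fn_le[of w] few prob_mistakes_target[OF label] alpha
    by (cases "w = u") simp_all
  let ?bad = "\<Union>v\<in>bad_points. {Ds. real (count_in (mistakes (point_fn v)) Ds) \<le> \<alpha> * n / 2}"
  let ?near = "{Ds. real (count_in (examples_at v0) Ds) \<le> 7 * \<alpha> / 8 * n / 2}"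
  let ?good = "{Ds. 3 * (9 * \<alpha> / 64) * n \<le> real (count_in (mistakes (point_fn w)) Ds)}"
  show ?thesis
  proof (rule pac_of_failure_event[OF finite_D, where F = "?bad \<union> ?near \<union> ?good"])
    have "measure_pmf.prob (iid D n) (?bad \<union> ?near \<union> ?good)
        \<le> measure_pmf.prob (iid D n) ?bad + measure_pmf.prob (iid D n) ?near
          + measure_pmf.prob (iid D n) ?good"
      by (meson add_right_mono order.trans prob_Un_le)
    also have "\<dots> \<le> 2 / 1000 + \<alpha> / 1000 + \<alpha> / 1000"
      using prob_bad_points_few_mistakes
        few_hits_unlikely[OF finite_D _ less_imp_le[OF heavy_if_bad[OF v0]]]
        many_hits_unlikely[OF finite_D _ err_w] alpha
      by (intro add_mono) simp_all
    finally show "measure_pmf.prob (iid D n) (?bad \<union> ?near \<union> ?good) \<le> 1 / 20"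
      using alpha by simp
    fix Ds assume "Ds \<in> set_pmf (iid D n)" "Ds \<notin> ?bad \<union> ?near \<union> ?good"
    then show "measure_pmf.prob (point_learner Ds) (- good_hyps) \<le> 1 / 20"
      using w(1,2) by (intro point_learner_errs_rarely) (auto simp: emp_err_def)
  qed
qed

end

end

context learner_params
begin

lemma point_learner_pac: "pac_learner d (point_class d) \<alpha> n point_learner"
  unfolding pac_learner_def
proof (intro allI impI)
  fix D assume "distr_on d D \<and> realizable (point_class d) D"
  then obtain u where "distr_on d D" "u \<in> cube d" "\<And>x y. (x, y) \<in> set_pmf D \<Longrightarrow> y = point_fn u x"
    by (auto simp: realizable_def point_class_def)
  then interpret point_target \<epsilon> \<alpha> d t r n D u
    by unfold_locales
  consider "\<alpha> / 8 \<le> measure_pmf.prob D pos_examples" | "bad_points = {}"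
    | v0 where "measure_pmf.prob D pos_examples < \<alpha> / 8" "v0 \<in> bad_points"
    by fastforce
  then show "0.9 \<le> measure_pmf.prob (bind_pmf (iid D n) point_learner) {h. err h D \<le> \<alpha>}"
    by cases (blast intro: pac_if_many_positives pac_if_no_bad_points pac_if_few_positives)+
qed

end

section \<open>Threshold functions\<close>

lemma (in learner_params) nested_bad_hyps_detected:
  assumes fin: "finite (set_pmf D)"
    and bad: "\<And>z. z \<in> Z \<Longrightarrow> \<alpha> < measure_pmf.prob D (mistakes (hyp_of z))"
    and least: "Z \<noteq> {} \<Longrightarrow> z' \<in> Z"
      "\<And>z. z \<in> Z \<Longrightarrow> mistakes (hyp_of z') \<inter> set_pmf D \<subseteq> mistakes (hyp_of z)"
  shows "\<exists>F. measure_pmf.prob (iid D n) F \<le> \<alpha> / 1000 \<and>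
    (\<forall>Ds\<in>set_pmf (iid D n). Ds \<notin> F \<longrightarrow> (\<forall>z\<in>Z. \<alpha> * n / 2 < emp_err (hyp_of z) Ds))"
proof (cases "Z = {}")
  case False
  let ?F = "{Ds. real (count_in (mistakes (hyp_of z')) Ds) \<le> \<alpha> * n / 2}"
  have "measure_pmf.prob (iid D n) ?F \<le> \<alpha> / 1000"
    using few_hits_unlikely[OF fin _ less_imp_le[OF bad[OF least(1)[OF False]]]] alpha by simp
  moreover have "\<alpha> * n / 2 < emp_err (hyp_of z) Ds"
    if "Ds \<in> set_pmf (iid D n)" "Ds \<notin> ?F" "z \<in> Z" for Ds z
    using that count_in_mono_sample[OF that(1) least(2)[OF that(3)]]
    by (simp add: emp_err_def)
  ultimately show ?thesis by blast
qed (use alpha in \<open>auto intro!: exI[of _ "{}"]\<close>)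

lemma lex_le_iff_le: "lex_le z x \<longleftrightarrow> z \<le> x"
proof -
  have "{(u, v). (u::bool) < v} = {(False, True)}" by auto
  then show ?thesis by (simp add: lex_le_def list_le_def list_less_def disj_commute)
qed

lemma take_mono_lexorder: "(xs :: 'a :: linorder list) \<le> ys \<Longrightarrow> take k xs \<le> take k ys"
proof (induction k arbitrary: xs ys)
  case (Suc k)
  show ?case
  proof (cases xs)
    case Nil
    then show ?thesis by (cases "take (Suc k) ys") auto
  next
    case (Cons x xs')
    then obtain y ys' where "ys = y # ys'" using Suc.prems by (cases ys) auto
    then show ?thesis using Suc Cons by auto
  qed
qed simp

lemma take_eq_if_between:
  "take k xs = q \<Longrightarrow> take k ys = q \<Longrightarrow> (xs :: 'a :: linorder list) \<le> zs \<Longrightarrow> zs \<le> ys \<Longrightarrow> take k zs = q"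
  using take_mono_lexorder[of xs zs k] take_mono_lexorder[of zs ys k] by simp

definition pad :: "nat \<Rightarrow> bool list \<Rightarrow> bool list" where
  "pad d p = p @ replicate (d - length p) False"

lemma pad_in_cube: "p \<in> cube_upto d \<Longrightarrow> pad d p \<in> cube d"
  by (auto simp: pad_def cube_upto_def cube_def)

lemma take_pad: "length p \<le> d \<Longrightarrow> take (length p) (pad d p) = p"
  by (simp add: pad_def)

context learner_params
begin

definition thre_learner :: "example list \<Rightarrow> hyp pmf" where
  "thre_learner = exp_mech (cube_upto d) (\<lambda>p. thre_fn (pad d p)) t (\<epsilon> / 4)"

lemma thre_learner_dp: "nabla0_dp d n \<epsilon> thre_learner"
  unfolding thre_learner_def using finite_cube_upto cube_upto_nonempty t_le_n eps
  by (intro exp_mech_dp) auto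

lemma thre_learner_proper: "proper (thre_class d) thre_learner"
  unfolding proper_def thre_learner_def
  by (auto simp: set_pmf_exp_mech finite_cube_upto cube_upto_nonempty pad_in_cube thre_class_def)

end

locale thre_target = learner_params +
  fixes D :: "example pmf" and z0 :: "bool list"
  assumes distr: "distr_on d D" and z0: "z0 \<in> cube d"
    and label: "\<And>x y. (x, y) \<in> set_pmf D \<Longrightarrow> y = (z0 \<le> x)"
begin

abbreviation "with_prefix q \<equiv> {(x :: bool list, y :: bool). take (length q) x = q}"
abbreviation "good_hyps \<equiv> {h. err h D \<le> \<alpha>}"

lemma finite_D: "finite (set_pmf D)"
  using distr by (rule finite_set_pmf_if_distr_on)

lemma label_thre_fn: "(x, y) \<in> set_pmf D \<Longrightarrow> y = thre_fn z0 x"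
  using label by (simp add: thre_fn_def lex_le_iff_le)

lemma mistakes_thre_fn_above:
  "z0 \<le> z1 \<Longrightarrow> z1 \<le> z \<Longrightarrow> mistakes (thre_fn z1) \<inter> set_pmf D \<subseteq> mistakes (thre_fn z)"
  using label by (fastforce simp: mistakes_def thre_fn_def lex_le_iff_le)

lemma mistakes_thre_fn_below:
  "z2 \<le> z0 \<Longrightarrow> z \<le> z2 \<Longrightarrow> mistakes (thre_fn z2) \<inter> set_pmf D \<subseteq> mistakes (thre_fn z)"
  using label by (fastforce simp: mistakes_def thre_fn_def lex_le_iff_le)

text \<open>All bad thresholds on one side of \<open>z0\<close> are detected through the one closest to \<open>z0\<close>.\<close>

lemma bad_thresholds_above_detected:
  "\<exists>F. measure_pmf.prob (iid D n) F \<le> \<alpha> / 1000 \<and> (\<forall>Ds\<in>set_pmf (iid D n). Ds \<notin> F \<longrightarrow>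
     (\<forall>z\<in>{z \<in> cube d. z0 \<le> z \<and> \<alpha> < measure_pmf.prob D (mistakes (thre_fn z))}.
        \<alpha> * n / 2 < emp_err (thre_fn z) Ds))"
  (is "\<exists>F. _ \<and> (\<forall>Ds\<in>_. _ \<longrightarrow> (\<forall>z\<in>?Z. _))")
proof (rule nested_bad_hyps_detected[OF finite_D])
  have "finite ?Z" by (simp add: finite_cube)
  then show "?Z \<noteq> {} \<Longrightarrow> Min ?Z \<in> ?Z"
    by (rule Min_in)
  show "mistakes (thre_fn (Min ?Z)) \<inter> set_pmf D \<subseteq> mistakes (thre_fn z)" if "z \<in> ?Z" for z
  proof -
    have "Min ?Z \<in> ?Z"
      using that \<open>finite ?Z\<close> by (intro Min_in) auto
    then show ?thesis
      using that \<open>finite ?Z\<close> by (intro mistakes_thre_fn_above Min_le) auto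
  qed
qed simp

lemma bad_thresholds_below_detected:
  "\<exists>F. measure_pmf.prob (iid D n) F \<le> \<alpha> / 1000 \<and> (\<forall>Ds\<in>set_pmf (iid D n). Ds \<notin> F \<longrightarrow>
     (\<forall>z\<in>{z \<in> cube d. z \<le> z0 \<and> \<alpha> < measure_pmf.prob D (mistakes (thre_fn z))}.
        \<alpha> * n / 2 < emp_err (thre_fn z) Ds))"
  (is "\<exists>F. _ \<and> (\<forall>Ds\<in>_. _ \<longrightarrow> (\<forall>z\<in>?Z. _))")
proof (rule nested_bad_hyps_detected[OF finite_D])
  have "finite ?Z" by (simp add: finite_cube)
  then show "?Z \<noteq> {} \<Longrightarrow> Max ?Z \<in> ?Z"
    by (rule Max_in)
  show "mistakes (thre_fn (Max ?Z)) \<inter> set_pmf D \<subseteq> mistakes (thre_fn z)" if "z \<in> ?Z" for z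
  proof -
    have "Max ?Z \<in> ?Z"
      using that \<open>finite ?Z\<close> by (intro Max_in) auto
    then show ?thesis
      using that \<open>finite ?Z\<close> by (intro mistakes_thre_fn_below Max_ge) auto
  qed
qed simp

lemma bad_thresholds_detected:
  obtains F where "measure_pmf.prob (iid D n) F \<le> 2 * \<alpha> / 1000"
    "\<And>Ds z. Ds \<in> set_pmf (iid D n) \<Longrightarrow> Ds \<notin> F \<Longrightarrow> z \<in> cube d
      \<Longrightarrow> \<alpha> < measure_pmf.prob D (mistakes (thre_fn z)) \<Longrightarrow> \<alpha> * n / 2 < emp_err (thre_fn z) Ds"
proof -
  obtain F1 F2 where F1: "measure_pmf.prob (iid D n) F1 \<le> \<alpha> / 1000"
      "\<And>Ds z. Ds \<in> set_pmf (iid D n) \<Longrightarrow> Ds \<notin> F1 \<Longrightarrow> z \<in> cube d \<Longrightarrow> z0 \<le> z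
        \<Longrightarrow> \<alpha> < measure_pmf.prob D (mistakes (thre_fn z)) \<Longrightarrow> \<alpha> * n / 2 < emp_err (thre_fn z) Ds"
    and F2: "measure_pmf.prob (iid D n) F2 \<le> \<alpha> / 1000"
      "\<And>Ds z. Ds \<in> set_pmf (iid D n) \<Longrightarrow> Ds \<notin> F2 \<Longrightarrow> z \<in> cube d \<Longrightarrow> z \<le> z0
        \<Longrightarrow> \<alpha> < measure_pmf.prob D (mistakes (thre_fn z)) \<Longrightarrow> \<alpha> * n / 2 < emp_err (thre_fn z) Ds"
    using bad_thresholds_above_detected bad_thresholds_below_detected by blast
  show ?thesis
  proof (rule that[of "F1 \<union> F2"])
    show "measure_pmf.prob (iid D n) (F1 \<union> F2) \<le> 2 * \<alpha> / 1000"
      using prob_Un_le[of "iid D n" F1 F2] F1(1) F2(1) by simp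
    show "\<alpha> * n / 2 < emp_err (thre_fn z) Ds"
      if "Ds \<in> set_pmf (iid D n)" "Ds \<notin> F1 \<union> F2" "z \<in> cube d"
        "\<alpha> < measure_pmf.prob D (mistakes (thre_fn z))" for Ds z
      using F1(2) F2(2) that linorder_le_cases[of z0 z] by blast
  qed
qed

lemma mistakes_pad_prefix_subset:
  assumes "take (length p) z0 = p" "length p \<le> d"
  shows "mistakes (thre_fn (pad d p)) \<inter> set_pmf D \<subseteq> with_prefix p"
proof safe
  fix x y assume xy: "(x, y) \<in> mistakes (thre_fn (pad d p))" "(x, y) \<in> set_pmf D"
  then have differ: "(pad d p \<le> x) \<noteq> (z0 \<le> x)"
    using label by (auto simp: mistakes_def thre_fn_def lex_le_iff_le)
  have pad: "take (length p) (pad d p) = p"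
    using assms(2) by (rule take_pad)
  show "take (length p) x = p"
  proof (cases "z0 \<le> x")
    case True
    then have "x \<le> pad d p" using differ by auto
    then show ?thesis using take_eq_if_between[OF assms(1) pad True] by simp
  next
    case False
    then have "pad d p \<le> x" "x \<le> z0" using differ by auto
    then show ?thesis using take_eq_if_between[OF pad assms(1)] by simp
  qed
qed

definition heavy_prefix_lengths :: "nat set" where
  "heavy_prefix_lengths = {l. l \<le> d \<and> \<alpha> / 16 < measure_pmf.prob D (with_prefix (take l z0))}"

definition l0 :: nat where
  "l0 = Max heavy_prefix_lengths"

definition candidate :: "bool list" where
  "candidate = take (Suc l0) z0"

lemma finite_heavy_prefix_lengths: "finite heavy_prefix_lengths"
  by (rule finite_subset[of _ "{..d}"]) (auto simp: heavy_prefix_lengths_def)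

lemma l0_heavy: "l0 \<in> heavy_prefix_lengths"
  unfolding l0_def heavy_prefix_lengths_def using alpha by (intro Max_in) (auto intro!: exI[of _ 0])

lemma l0_le: "l0 \<le> d"
  using l0_heavy by (simp add: heavy_prefix_lengths_def)

lemma length_take_l0: "length (take l0 z0) = l0"
  using l0_le z0 by (simp add: cube_def)

lemma candidate_in_cube_upto: "candidate \<in> cube_upto d"
  using z0 by (simp add: candidate_def cube_upto_def cube_def)

lemma prob_mistakes_candidate: "measure_pmf.prob D (mistakes (thre_fn (pad d candidate))) \<le> \<alpha> / 16"
proof (cases "l0 = d")
  case True
  then have "pad d candidate = z0"
    using z0 by (simp add: candidate_def pad_def cube_def)
  then show ?thesis
    using prob_mistakes_target[OF label_thre_fn] alpha by simp
next
  case False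
  then have length: "length candidate = Suc l0" "Suc l0 \<le> d"
    using l0_le z0 by (simp_all add: candidate_def cube_def)
  have "Suc l0 \<notin> heavy_prefix_lengths"
    using Max_ge[OF finite_heavy_prefix_lengths, of "Suc l0"] by (auto simp: l0_def)
  then have light: "measure_pmf.prob D (with_prefix candidate) \<le> \<alpha> / 16"
    using length by (simp add: heavy_prefix_lengths_def candidate_def)
  have "take (length candidate) z0 = candidate"
    using length by (simp add: candidate_def)
  then have "measure_pmf.prob D (mistakes (thre_fn (pad d candidate)) \<inter> set_pmf D)
      \<le> measure_pmf.prob D (with_prefix candidate)"
    using length by (intro measure_pmf.finite_measure_mono mistakes_pad_prefix_subset) auto
  then show ?thesis
    using light measure_Int_set_pmf[of D] by simp
qed

lemma hamming_dist_candidate_le_1: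
  assumes "x \<in> cube d" "take l0 x = take l0 z0"
  shows "hamming_dist x candidate \<le> 1"
proof -
  have "candidate = take l0 z0 @ take 1 (drop l0 z0)"
    by (simp add: candidate_def take_add[symmetric])
  then have "hamming_dist x candidate
      = hamming_dist (take l0 x @ drop l0 x) (take l0 z0 @ take 1 (drop l0 z0))"
    by simp
  also have "\<dots> = hamming_dist (take l0 x) (take l0 z0) + hamming_dist (drop l0 x) (take 1 (drop l0 z0))"
    using assms(2) by (intro hamming_dist_append) simp
  also have "\<dots> \<le> 1"
    using assms(2) hamming_dist_le_length[of "drop l0 x" "take 1 (drop l0 z0)"] by simp
  finally show ?thesis .
qed

lemma thre_pac:
  "0.9 \<le> measure_pmf.prob (bind_pmf (iid D n) thre_learner) good_hyps"
proof -
  obtain F where F: "measure_pmf.prob (iid D n) F \<le> 2 * \<alpha> / 1000"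
      "\<And>Ds z. Ds \<in> set_pmf (iid D n) \<Longrightarrow> Ds \<notin> F \<Longrightarrow> z \<in> cube d
        \<Longrightarrow> \<alpha> < measure_pmf.prob D (mistakes (thre_fn z)) \<Longrightarrow> \<alpha> * n / 2 < emp_err (thre_fn z) Ds"
    using bad_thresholds_detected by blast
  let ?few = "{Ds. real (count_in (with_prefix (take l0 z0)) Ds) \<le> \<alpha> / 16 * n / 2}"
  let ?many = "{Ds. 3 * (\<alpha> / 16) * n \<le> real (count_in (mistakes (thre_fn (pad d candidate))) Ds)}"
  show ?thesis
  proof (rule pac_of_failure_event[OF finite_D, where F = "F \<union> ?few \<union> ?many"])
    have "measure_pmf.prob (iid D n) (F \<union> ?few \<union> ?many)
        \<le> measure_pmf.prob (iid D n) F + measure_pmf.prob (iid D n) ?few + measure_pmf.prob (iid D n) ?many"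
      by (meson add_right_mono order.trans prob_Un_le)
    also have "\<dots> \<le> 2 * \<alpha> / 1000 + \<alpha> / 1000 + \<alpha> / 1000"
      using F(1) l0_heavy alpha
        few_hits_unlikely[OF finite_D, of "\<alpha> / 16" "with_prefix (take l0 z0)"]
        many_hits_unlikely[OF finite_D _ prob_mistakes_candidate]
      by (intro add_mono) (simp_all add: heavy_prefix_lengths_def)
    finally show "measure_pmf.prob (iid D n) (F \<union> ?few \<union> ?many) \<le> 1 / 20"
      using alpha by simp
    fix Ds assume Ds: "Ds \<in> set_pmf (iid D n)" "Ds \<notin> F \<union> ?few \<union> ?many"
    let ?near = "{(x, y). x \<in> cube d \<and> take l0 x = take l0 z0}"
    have "t \<le> count_in (with_prefix (take l0 z0)) Ds"
      using Ds(2) t_le alpha by simp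
    also have "\<dots> \<le> count_in ?near Ds"
      using distr length_take_l0 by (intro count_in_mono_sample[OF Ds(1)]) (auto simp: distr_on_def)
    finally have "near_dist t Ds candidate \<le> t * 1"
      by (rule near_dist_le_of_count_in) (use hamming_dist_candidate_le_1 in blast)
    then have "score (\<lambda>p. thre_fn (pad d p)) t Ds candidate \<le> 3 * (\<alpha> / 16) * n + t"
      using Ds(2) by (simp add: score_def emp_err_def)
    then show "measure_pmf.prob (thre_learner Ds) (- good_hyps) \<le> 1 / 20"
      unfolding thre_learner_def
      using sample_in_cube[OF distr Ds(1)] F(2)[OF Ds(1)] Ds(2) t_le
      by (intro exp_mech_errs_rarely[OF finite_cube_upto cube_upto_nonempty order.refl _ _
            candidate_in_cube_upto, where A = "\<alpha> * n / 2"])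
        (auto simp: err_eq_prob_mistakes pad_in_cube less_imp_le)
  qed
qed

end

context learner_params
begin

lemma thre_learner_pac: "pac_learner d (thre_class d) \<alpha> n thre_learner"
  unfolding pac_learner_def
proof (intro allI impI)
  fix D assume "distr_on d D \<and> realizable (thre_class d) D"
  then obtain z0 where "distr_on d D" "z0 \<in> cube d" "\<And>x y. (x, y) \<in> set_pmf D \<Longrightarrow> y = (z0 \<le> x)"
    by (auto simp: realizable_def thre_class_def thre_fn_def lex_le_iff_le)
  then interpret thre_target \<epsilon> \<alpha> d t r n D z0
    by unfold_locales
  show "0.9 \<le> measure_pmf.prob (bind_pmf (iid D n) thre_learner) {h. err h D \<le> \<alpha>}"
    by (rule thre_pac)
qed

end

section \<open>Sample complexity\<close>

lemma real_nat_ceiling_le: "0 \<le> x \<Longrightarrow> real (nat \<lceil>x\<rceil>) \<le> x + 1"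
  using of_int_ceiling_le_add_one[of x] by simp

lemma radius_exists:
  fixes \<alpha> :: real
  assumes "0 < \<alpha>" "\<alpha> < 1"
  obtains r :: nat where "64 / \<alpha> \<le> 2 ^ r" "1 \<le> r" "real r \<le> 10 * (1 + ln (1 / \<alpha>))"
proof
  let ?r = "nat \<lceil>log 2 (64 / \<alpha>)\<rceil>"
  have log_64: "log 2 (64 :: real) = 6"
    using log_nat_power[of 2 2 6] by simp
  have "6 < log 2 (64 / \<alpha>)"
    using assms log_less_cancel_iff[of 2 64 "64 / \<alpha>"] log_64 by (simp add: field_simps)
  moreover have r_ge: "log 2 (64 / \<alpha>) \<le> real ?r"
    by (rule real_nat_ceiling_ge)
  ultimately show "1 \<le> ?r" by linarith
  have "64 / \<alpha> = 2 powr log 2 (64 / \<alpha>)"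
    using assms by simp
  also have "\<dots> \<le> 2 ^ ?r"
    using r_ge by (simp add: powr_realpow[symmetric])
  finally show "64 / \<alpha> \<le> 2 ^ ?r" .
  have "log 2 (64 / \<alpha>) = (6 * ln 2 + ln (1 / \<alpha>)) / ln 2"
    using assms ln_realpow[of 2 6] by (simp add: log_def ln_div)
  also have "\<dots> \<le> (6 * ln 2 + ln (1 / \<alpha>)) / (1 / 2)"
    using ln2_ge_two_thirds assms by (intro divide_left_mono) auto
  finally have "log 2 (64 / \<alpha>) \<le> 12 * ln 2 + 2 * ln (1 / \<alpha>)"
    by simp
  moreover have "real ?r \<le> log 2 (64 / \<alpha>) + 1"
    using \<open>6 < log 2 (64 / \<alpha>)\<close> by (intro real_nat_ceiling_le) simp
  moreover have "0 \<le> ln (1 / \<alpha>)"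
    using assms by simp
  ultimately show "real ?r \<le> 10 * (1 + ln (1 / \<alpha>))"
    unfolding distrib_left using ln2_le_three_quarters by linarith
qed

lemma ln_budget_le:
  assumes "0 < \<alpha>" "\<alpha> < 1" "1 \<le> d"
  shows "ln (real d + 1) + ln (1 / \<alpha>) + 5 \<le> 6 * (1 + ln (real d)) * (1 + ln (1 / \<alpha>))"
proof -
  define a where "a = 1 + ln (real d)"
  define b where "b = 1 + ln (1 / \<alpha>)"
  have a: "1 \<le> a" and b: "1 \<le> b"
    using assms by (simp_all add: a_def b_def)
  have "ln (real d + 1) \<le> ln (2 * real d)"
    using assms by simp
  also have "\<dots> = ln 2 + ln (real d)"
    using assms by (simp add: ln_mult)
  finally have "ln (real d + 1) + ln (1 / \<alpha>) + 5 \<le> a + b + 4"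
    using ln2_le_three_quarters by (simp add: a_def b_def)
  also have "\<dots> \<le> 6 * a * b"
    using a b mult_left_mono[of 1 b a] mult_right_mono[of 1 a b] by linarith
  finally show ?thesis by (simp add: a_def b_def)
qed

lemma neighbour_count_exists:
  fixes \<epsilon> L :: real
  assumes "0 < \<epsilon>" "\<epsilon> \<le> 1" "5 \<le> L"
  obtains t :: nat where "L \<le> \<epsilon> / 4 * t" "real t \<le> 5 * L / \<epsilon>" "1 \<le> t"
proof -
  define t where "t = nat \<lceil>4 * L / \<epsilon>\<rceil>"
  have "4 * L / \<epsilon> \<le> t"
    unfolding t_def by (rule real_nat_ceiling_ge)
  then have t: "L \<le> \<epsilon> / 4 * t"
    using assms by (simp add: field_simps)
  moreover have "real t \<le> 5 * L / \<epsilon>"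
    using real_nat_ceiling_le[of "4 * L / \<epsilon>"] assms by (simp add: t_def field_simps)
  moreover have "5 \<le> \<epsilon> / 4 * t"
    using t assms by linarith
  then have "1 \<le> t"
    using assms mult_right_mono[of \<epsilon> 1 "real t"] by simp
  ultimately show ?thesis
    using that by blast
qed

lemma learner_params_exist:
  assumes eps: "0 < \<epsilon>" "\<epsilon> \<le> 1" and alpha: "0 < \<alpha>" "\<alpha> < 1" and d: "1 \<le> d"
  obtains t r n where "learner_params \<epsilon> \<alpha> d t r n"
    "real n \<le> 19500 * (1 / (\<alpha> * \<epsilon>)) * (1 + ln (real d)) * (1 + ln (1 / \<alpha>)) ^ 2"
proof -
  define a where "a = 1 + ln (real d)"
  define b where "b = 1 + ln (1 / \<alpha>)"
  define L where "L = ln (real d + 1) + ln (1 / \<alpha>) + 5"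
  have L: "5 \<le> L" "L \<le> 6 * a * b"
    using alpha ln_budget_le[OF alpha d] by (simp_all add: a_def b_def L_def)
  obtain r where r: "64 / \<alpha> \<le> 2 ^ r" "1 \<le> r" "real r \<le> 10 * b"
    using radius_exists[OF alpha] unfolding b_def by blast
  obtain t where t: "L \<le> \<epsilon> / 4 * t" "real t \<le> 5 * L / \<epsilon>" "1 \<le> t"
    using neighbour_count_exists[OF eps L(1)] by blast
  define n where "n = nat \<lceil>64 * t * r / \<alpha>\<rceil>"
  have "64 * t * r / \<alpha> \<le> n"
    unfolding n_def by (rule real_nat_ceiling_ge)
  then have n_ge: "64 * t * r \<le> \<alpha> * n"
    using alpha by (simp add: field_simps)
  have "1 \<le> real t * r"
    using r(2) t(3) mult_mono[of 1 "real t" 1 "real r"] by simp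
  then have n_le: "\<alpha> * n \<le> 65 * t * r"
    using real_nat_ceiling_le[of "64 * t * r / \<alpha>"] alpha by (simp add: n_def field_simps)
  have "learner_params \<epsilon> \<alpha> d t r n"
    using eps alpha d t r n_ge n_le by unfold_locales (simp_all add: L_def)
  moreover have "real n \<le> 19500 * (1 / (\<alpha> * \<epsilon>)) * a * b ^ 2"
  proof -
    have "real t * r \<le> (5 * (6 * a * b) / \<epsilon>) * (10 * b)"
      using t(2) L r(3) eps by (intro mult_mono order.trans[OF t(2)] divide_right_mono) auto
    then have "\<epsilon> * (real t * r) \<le> 300 * a * b\<^sup>2"
      using eps by (simp add: field_simps power2_eq_square)
    moreover have "\<alpha> * \<epsilon> * n \<le> 65 * (\<epsilon> * (real t * r))"
      using mult_left_mono[OF n_le, of \<epsilon>] eps by (simp add: algebra_simps)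
    ultimately have "\<alpha> * \<epsilon> * n \<le> 19500 * a * b\<^sup>2"
      by linarith
    then show ?thesis
      using alpha eps by (simp add: field_simps)
  qed
  ultimately show ?thesis
    using that by (simp add: a_def b_def)
qed

lemma learners_of_params:
  assumes "\<exists>t r n. learner_params \<epsilon> \<alpha> d t r n \<and> real n \<le> B"
  shows "(\<exists>n M. real n \<le> B \<and> nabla0_dp d n \<epsilon> M \<and> proper (point_class d) M
            \<and> pac_learner d (point_class d) \<alpha> n M)
    \<and> (\<exists>n M. real n \<le> B \<and> nabla0_dp d n \<epsilon> M \<and> proper (thre_class d) M
            \<and> pac_learner d (thre_class d) \<alpha> n M)"
proof -
  obtain t r n where params: "learner_params \<epsilon> \<alpha> d t r n" and size: "real n \<le> B"
    using assms by blast
  interpret learner_params \<epsilon> \<alpha> d t r n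
    by (fact params)
  show ?thesis
    using size point_learner_dp point_learner_proper point_learner_pac
      thre_learner_dp thre_learner_proper thre_learner_pac by blast
qed

lemma polylog_factor_le:
  assumes "0 < \<alpha>" "\<alpha> < 1" "1 \<le> d"
  shows "(1 + ln (1 / \<alpha>)) ^ 2 \<le> ((1 + ln (1 / \<alpha>)) * (1 + ln (1 + ln (real d)))) ^ 2"
proof -
  have "1 \<le> (1 + ln (1 + ln (real d))) ^ 2"
    using assms by (intro one_le_power) simp
  then show ?thesis
    using mult_left_mono[of 1 "(1 + ln (1 + ln (real d))) ^ 2" "(1 + ln (1 / \<alpha>)) ^ 2"]
    by (simp add: power_mult_distrib)
qed

theorem theorem5p4:
  shows "\<exists>C k::nat. C > 0 \<and> (\<forall>\<epsilon> \<alpha> (d::nat). 0 < \<epsilon> \<and> \<epsilon> \<le> 1 \<and> 0 < \<alpha> \<and> \<alpha> < 1 \<and> d \<ge> 1 \<longrightarrow>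
     (\<exists>n M. real n \<le> C * (1 / (\<alpha> * \<epsilon>)) * (1 + ln (real d))
                 * ((1 + ln (1 / \<alpha>)) * (1 + ln (1 + ln (real d)))) ^ k
            \<and> nabla0_dp d n \<epsilon> M \<and> proper (point_class d) M
            \<and> pac_learner d (point_class d) \<alpha> n M)
   \<and> (\<exists>n M. real n \<le> C * (1 / (\<alpha> * \<epsilon>)) * (1 + ln (real d))
                 * ((1 + ln (1 / \<alpha>)) * (1 + ln (1 + ln (real d)))) ^ k
            \<and> nabla0_dp d n \<epsilon> M \<and> proper (thre_class d) M
            \<and> pac_learner d (thre_class d) \<alpha> n M))"
proof -
  have params_exist: "\<exists>t r n. learner_params \<epsilon> \<alpha> d t r n \<and> real n \<le> 19500 * (1 / (\<alpha> * \<epsilon>))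
      * (1 + ln (real d)) * ((1 + ln (1 / \<alpha>)) * (1 + ln (1 + ln (real d)))) ^ 2"
    if params: "0 < \<epsilon> \<and> \<epsilon> \<le> 1 \<and> 0 < \<alpha> \<and> \<alpha> < 1 \<and> d \<ge> 1" for \<epsilon> \<alpha> :: real and d :: nat
  proof -
    obtain t r n where "learner_params \<epsilon> \<alpha> d t r n"
      and "real n \<le> 19500 * (1 / (\<alpha> * \<epsilon>)) * (1 + ln (real d)) * (1 + ln (1 / \<alpha>)) ^ 2"
      by (rule learner_params_exist[of \<epsilon> \<alpha> d]) (use params in auto)
    moreover have "\<dots> \<le> 19500 * (1 / (\<alpha> * \<epsilon>)) * (1 + ln (real d))
        * ((1 + ln (1 / \<alpha>)) * (1 + ln (1 + ln (real d)))) ^ 2"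
      using params polylog_factor_le[of \<alpha> d] by (intro mult_left_mono) auto
    ultimately show ?thesis
      by (blast intro: order.trans)
  qed
  show ?thesis
    by (rule exI[of _ 19500], rule exI[of _ 2], intro conjI[OF _ allI] allI impI learners_of_params)
      (simp, erule params_exist)
qed

end
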